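(* (i) For every $\alpha\in(0,1]$, $\mathrm{ES}_\alpha$ (as a map $L^\infty\to\overline{\mathbb{R}}$) is quasi-convex, law invariant and satisfies $\mathrm{ES}_\alpha\ge\mathrm{VaR}_\alpha$ on $L^\infty$, and every quasi-convex, law-invariant $\rho:L^\infty\to\overline{\mathbb{R}}$ with $\rho(X)\ge\mathrm{VaR}_\alpha(X)$ for all $X\in L^\infty$ satisfies $\rho\ge\mathrm{ES}_\alpha$ on $L^\infty$; i.e. $$\mathrm{ES}_\alpha=\min\{\rho:L^\infty\to\overline{\mathbb{R}}\mid \rho\ge\mathrm{VaR}_\alpha \text{ and } \rho \text{ is quasi-convex and law invariant}\}.$$ (ii) For every $\alpha\in[0,1)$, $$\mathrm{ES}_\alpha=\min\{\rho:L^\infty\to\overline{\mathbb{R}}\mid \rho\ge\mathrm{VaR}^+_\alpha \text{ and } \rho \text{ is quasi-convex and law invariant}\},$$ in the same sense.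
   Context: $(\Omega,\mathcal F,\mathbb P)$ is an atomless probability space, $L^0$ the set of all random variables, $L^\infty$ the essentially bounded ones, $\overline{\mathbb{R}}=[-\infty,\infty]$. For $\alpha\in[0,1]$ and $X\in L^0$: $\mathrm{VaR}_\alpha(X)=\inf\{x\in\mathbb{R}:\mathbb P(X\le x)\ge\alpha\}$, $\mathrm{VaR}^+_\alpha(X)=\inf\{x\in\mathbb{R}:\mathbb P(X\le x)>\alpha\}$ (with $\inf\mathbb{R}=-\infty$, $\inf\emptyset=\infty$; $\mathrm{VaR}_1$ is the essential supremum and $\mathrm{VaR}^+_0$ the essential infimum). For $X\in L^\infty$: $\mathrm{ES}_\alpha(X)=\frac{1}{1-\alpha}\int_\alpha^1\mathrm{VaR}_\beta(X)\,\mathrm d\beta$ for $\alpha\in[0,1)$ and $\mathrm{ES}_1(X)=\mathrm{VaR}_1(X)$. A map $\rho:L^\infty\to\overline{\mathbb{R}}$ is quasi-convex if $\rho(\gamma X+(1-\gamma)Y)\le\max\{\rho(X),\rho(Y)\}$ for all $X,Y\in L^\infty$, $\gamma\in[0,1]$, and law invariant if $\rho(X)=\rho(Y)$ whenever $X,Y$ have the same distribution. $\rho\ge\widetilde\rho$ means $\rho(X)\ge\widetilde\rho(X)$ for all $X$ in the common domain; "min" of a set of maps means an element of the set that is pointwise $\le$ every element. *)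

theory Defs
  imports "HOL-Probability.Probability"
begin

definition atomless :: "'a measure \<Rightarrow> bool" where
  "atomless M \<longleftrightarrow> (\<forall>A\<in>sets M. 0 < measure M A \<longrightarrow>
      (\<exists>B\<in>sets M. B \<subseteq> A \<and> 0 < measure M B \<and> measure M B < measure M A))"

definition Linf :: "'a measure \<Rightarrow> ('a \<Rightarrow> real) set" where
  "Linf M = {X. X \<in> borel_measurable M \<and> (\<exists>C. AE \<omega> in M. \<bar>X \<omega>\<bar> \<le> C)}"

definition VaR :: "'a measure \<Rightarrow> real \<Rightarrow> ('a \<Rightarrow> real) \<Rightarrow> ereal" where
  "VaR M \<alpha> X = Inf (ereal ` {x::real. measure M {\<omega>\<in>space M. X \<omega> \<le> x} \<ge> \<alpha>})"

definition VaR_plus :: "'a measure \<Rightarrow> real \<Rightarrow> ('a \<Rightarrow> real) \<Rightarrow> ereal" where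
  "VaR_plus M \<alpha> X = Inf (ereal ` {x::real. measure M {\<omega>\<in>space M. X \<omega> \<le> x} > \<alpha>})"

text \<open>For X in L-infinity, VaR at beta is finite for beta in (0,1]; the single point
  beta = 0 (where VaR is -infinity) is a null set for the integral.\<close>
definition ES :: "'a measure \<Rightarrow> real \<Rightarrow> ('a \<Rightarrow> real) \<Rightarrow> ereal" where
  "ES M \<alpha> X = (if \<alpha> < 1
     then ereal (1 / (1 - \<alpha>) * (LBINT \<beta>=ereal \<alpha>..ereal 1. real_of_ereal (VaR M \<beta> X)))
     else VaR M 1 X)"

definition quasi_convex :: "'a measure \<Rightarrow> (('a \<Rightarrow> real) \<Rightarrow> ereal) \<Rightarrow> bool" where
  "quasi_convex M \<rho> \<longleftrightarrow> (\<forall>X\<in>Linf M. \<forall>Y\<in>Linf M. \<forall>\<gamma>::real. 0 \<le> \<gamma> \<and> \<gamma> \<le> 1 \<longrightarrow>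
      \<rho> (\<lambda>\<omega>. \<gamma> * X \<omega> + (1 - \<gamma>) * Y \<omega>) \<le> max (\<rho> X) (\<rho> Y))"

definition law_invariant :: "'a measure \<Rightarrow> (('a \<Rightarrow> real) \<Rightarrow> ereal) \<Rightarrow> bool" where
  "law_invariant M \<rho> \<longleftrightarrow> (\<forall>X\<in>Linf M. \<forall>Y\<in>Linf M.
      distr M borel X = distr M borel Y \<longrightarrow> \<rho> X = \<rho> Y)"

end

theory Submission
  imports Defs
begin

(* ES_alpha(X) is the average of the quantile function of X over (alpha, 1]. It depends only on
   the law of X, dominates VaR+_alpha >= VaR_alpha, and is convex by the Rockafellar-Uryasev
   formula (1 - alpha) ES_alpha(X) = min_t (t (1 - alpha) + E[max (X - t) 0]).

   For minimality, atomlessness provides a uniformly distributed U. Shifting U cyclically on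
   (alpha, 1] by multiples of (1 - alpha) / n and applying the monotone quantile function of X
   gives n random variables with the law of X; on the event {U > alpha}, of probability
   1 - alpha, their average is at least a lower Riemann sum of ES_alpha(X), which is
   ES_alpha(X) - O(1/n). So VaR+_alpha of the average is at least ES_alpha(X) - O(1/n), and a
   quasi-convex law-invariant rho >= VaR+_alpha has rho(X) >= rho(average) >= VaR+_alpha(average).
   For rho >= VaR_alpha the same holds at every level b < alpha, since VaR_alpha >= VaR+_b, and
   ES_b(X) tends to ES_alpha(X) as b increases to alpha. *)

section \<open>Intermediate values in atomless probability spaces\<close>

locale atomless_prob_space = prob_space M for M :: "'a measure" +
  assumes atomless: "atomless M"
begin

lemma exists_subset_measure_le_pow:
  assumes A: "A \<in> sets M" "0 < measure M A"
  shows "\<exists>B\<in>sets M. B \<subseteq> A \<and> 0 < measure M B \<and> measure M B \<le> measure M A / 2 ^ k"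
proof (induction k)
  case 0
  then show ?case using A by auto
next
  case (Suc k)
  then obtain B where B: "B \<in> sets M" "B \<subseteq> A" "0 < measure M B" "measure M B \<le> measure M A / 2 ^ k"
    by blast
  then obtain B' where B': "B' \<in> sets M" "B' \<subseteq> B" "0 < measure M B'" "measure M B' < measure M B"
    using atomless unfolding atomless_def by blast
  have diff: "measure M (B - B') = measure M B - measure M B'"
    using B B' by (intro finite_measure_Diff) auto
  have half: "measure M B / 2 \<le> measure M A / 2 ^ Suc k"
    using B(4) by (simp add: field_simps)
  show ?case
  proof (cases "measure M B' \<le> measure M B / 2")
    case True
    then show ?thesis using B B' half by (intro bexI[of _ B']) auto
  next
    case False
    then show ?thesis using B B' diff half by (intro bexI[of _ "B - B'"]) auto
  qed
qed

lemma exists_small_subset: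
  assumes A: "A \<in> sets M" "0 < measure M A" and e: "0 < e"
  shows "\<exists>B\<in>sets M. B \<subseteq> A \<and> 0 < measure M B \<and> measure M B < e"
proof -
  obtain k where k: "(1/2::real) ^ k < e"
    using real_arch_pow_inv[OF e, of "1/2"] by auto
  obtain B where B: "B \<in> sets M" "B \<subseteq> A" "0 < measure M B" "measure M B \<le> measure M A / 2 ^ k"
    using exists_subset_measure_le_pow[OF A] by blast
  have "measure M A / 2 ^ k \<le> 1 / 2 ^ k"
    using prob_le_1[of A] by (intro divide_right_mono) auto
  then show ?thesis using B k by (intro bexI[of _ B]) (auto simp: power_one_over)
qed

text \<open>Sierpinski's intermediate value theorem, by greedy exhaustion: each step adds to the current
  set D a piece of \<open>A - D\<close> of at least half the largest measure that still fits under c. If the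
  union fell short of c, one fixed piece of positive measure would fit at every step, so the
  measures would grow without bound.\<close>

definition greedy_gain :: "'a set \<Rightarrow> real \<Rightarrow> 'a set \<Rightarrow> real" where
  "greedy_gain A c D =
     Sup {measure M C | C. C \<in> sets M \<and> C \<subseteq> A - D \<and> measure M D + measure M C \<le> c}"

definition greedy_step :: "'a set \<Rightarrow> real \<Rightarrow> 'a set \<Rightarrow> 'a set" where
  "greedy_step A c D = (SOME C. C \<in> sets M \<and> C \<subseteq> A - D \<and> measure M D + measure M C \<le> c \<and>
     greedy_gain A c D / 2 \<le> measure M C)"

primrec greedy_seq :: "'a set \<Rightarrow> real \<Rightarrow> nat \<Rightarrow> 'a set" where
  "greedy_seq A c 0 = {}"
| "greedy_seq A c (Suc n) = greedy_seq A c n \<union> greedy_step A c (greedy_seq A c n)"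

lemma greedy_gain_upper:
  assumes "C \<in> sets M" "C \<subseteq> A - D" "measure M D + measure M C \<le> c"
  shows "measure M C \<le> greedy_gain A c D"
  unfolding greedy_gain_def
  by (rule cSup_upper) (use assms prob_le_1 in \<open>auto intro!: bdd_aboveI[of _ 1]\<close>)

lemma greedy_step_exists:
  assumes "D \<in> sets M" "measure M D \<le> c"
  shows "\<exists>C. C \<in> sets M \<and> C \<subseteq> A - D \<and> measure M D + measure M C \<le> c \<and>
    greedy_gain A c D / 2 \<le> measure M C"
proof (cases "greedy_gain A c D \<le> 0")
  case True
  then show ?thesis using assms by (intro exI[of _ "{}"]) auto
next
  case False
  let ?S = "{measure M C | C. C \<in> sets M \<and> C \<subseteq> A - D \<and> measure M D + measure M C \<le> c}"
  have ne: "?S \<noteq> {}" using assms by (auto intro!: exI[of _ "{}"])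
  have bdd: "bdd_above ?S" using prob_le_1 by (auto intro!: bdd_aboveI[of _ 1])
  have "greedy_gain A c D / 2 < greedy_gain A c D" using False by auto
  then have "\<exists>x\<in>?S. greedy_gain A c D / 2 < x"
    unfolding greedy_gain_def using less_cSup_iff[OF ne bdd] by (simp add: greedy_gain_def)
  then show ?thesis by (auto intro: less_imp_le)
qed

lemma greedy_step_spec:
  assumes "D \<in> sets M" "measure M D \<le> c"
  shows "greedy_step A c D \<in> sets M" "greedy_step A c D \<subseteq> A - D"
    "measure M D + measure M (greedy_step A c D) \<le> c"
    "greedy_gain A c D / 2 \<le> measure M (greedy_step A c D)"
  using someI_ex[OF greedy_step_exists[OF assms, of A]] unfolding greedy_step_def by blast+

lemma measure_greedy_seq_Suc:
  assumes "greedy_seq A c n \<in> sets M" "measure M (greedy_seq A c n) \<le> c"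
  shows "measure M (greedy_seq A c (Suc n)) =
    measure M (greedy_seq A c n) + measure M (greedy_step A c (greedy_seq A c n))"
  using greedy_step_spec[OF assms, of A] assms by (simp, intro finite_measure_Union) auto

lemma greedy_seq_spec:
  assumes "0 \<le> c"
  shows "greedy_seq A c n \<in> sets M \<and> greedy_seq A c n \<subseteq> A \<and> measure M (greedy_seq A c n) \<le> c"
proof (induction n)
  case 0
  then show ?case using assms by simp
next
  case (Suc n)
  then show ?case
    using greedy_step_spec[of "greedy_seq A c n" c A] measure_greedy_seq_Suc[of A c n] by auto
qed

lemma greedy_seq_grows:
  assumes "0 \<le> c" "C \<in> sets M" "C \<subseteq> A - (\<Union>n. greedy_seq A c n)"
    "measure M (\<Union>n. greedy_seq A c n) + measure M C \<le> c"
  shows "measure M (greedy_seq A c n) + measure M C / 2 \<le> measure M (greedy_seq A c (Suc n))"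
proof -
  note seq = greedy_seq_spec[OF assms(1)]
  have "measure M (greedy_seq A c n) \<le> measure M (\<Union>n. greedy_seq A c n)"
    using seq by (intro finite_measure_mono) auto
  then have "measure M C \<le> greedy_gain A c (greedy_seq A c n)"
    using assms seq by (intro greedy_gain_upper) auto
  then show ?thesis
    using seq greedy_step_spec[of "greedy_seq A c n" c A] measure_greedy_seq_Suc[of A c n] by auto
qed

theorem exists_subset_measure_eq:
  assumes A: "A \<in> sets M" and c: "0 \<le> c" "c \<le> measure M A"
  shows "\<exists>B\<in>sets M. B \<subseteq> A \<and> measure M B = c"
proof -
  let ?B = "greedy_seq A c" and ?U = "\<Union>n. greedy_seq A c n"
  note seq = greedy_seq_spec[OF c(1)]
  have lim: "(\<lambda>n. measure M (?B n)) \<longlonglongrightarrow> measure M ?U"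
    by (rule finite_Lim_measure_incseq) (use seq in \<open>auto intro: incseq_SucI\<close>)
  have U: "?U \<in> sets M" "?U \<subseteq> A" using seq by auto
  have le: "measure M ?U \<le> c"
    by (rule LIMSEQ_le_const2[OF lim]) (use seq in auto)
  have "measure M ?U = c"
  proof (rule ccontr)
    assume "measure M ?U \<noteq> c"
    with le have lt: "measure M ?U < c" by auto
    have "measure M (A - ?U) = measure M A - measure M ?U"
      using U A by (intro finite_measure_Diff) auto
    then obtain C where C: "C \<in> sets M" "C \<subseteq> A - ?U" "0 < measure M C"
      "measure M C < c - measure M ?U"
      using exists_small_subset[of "A - ?U" "c - measure M ?U"] U A lt c by auto
    have linear_growth: "real n * (measure M C / 2) \<le> measure M (?B n)" for n
    proof (induction n)
      case (Suc n)
      then show ?case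
        using greedy_seq_grows[OF c(1) C(1,2), of n] C(4) by (auto simp: algebra_simps)
    qed simp
    obtain n where "2 / measure M C < real n"
      using reals_Archimedean2 by blast
    then have "1 < real n * (measure M C / 2)"
      using C(3) by (auto simp: field_simps)
    then show False using linear_growth[of n] prob_le_1[of "?B n"] by linarith
  qed
  then show ?thesis using U by blast
qed

end

definition uniform01 :: "real measure" where
  "uniform01 = restrict_space lborel {0<..<1}"

lemma space_uniform01: "space uniform01 = {0<..<1}"
  by (simp add: uniform01_def space_restrict_space)

lemma prob_space_uniform01: "prob_space uniform01"
  by (auto simp: uniform01_def emeasure_restrict_space space_restrict_space intro!: prob_spaceI)

lemma measurable_uniform01I:
  assumes "f \<in> borel_measurable borel"
  shows "f \<in> borel_measurable uniform01"
  unfolding uniform01_def by (intro measurable_restrict_space1) (use assms in simp)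

lemma measure_uniform01:
  assumes "S \<in> sets borel"
  shows "measure uniform01 (S \<inter> {0<..<1}) = measure lborel (S \<inter> {0<..1})"
proof -
  have "S \<inter> {0<..1} = (S \<inter> {0<..<1}) \<union> (S \<inter> {1})" by auto
  moreover have "S \<inter> {1} \<in> null_sets lborel"
    by (rule null_sets_subset[of "{1}"]) (use assms in auto)
  ultimately have "measure lborel (S \<inter> {0<..1}) = measure lborel (S \<inter> {0<..<1})"
    using assms by (simp add: measure_Un_null_set)
  then show ?thesis unfolding uniform01_def by (subst measure_restrict_space) auto
qed

lemma integrable_uniform01_bounded:
  fixes f :: "real \<Rightarrow> real"
  assumes "f \<in> borel_measurable borel" "\<And>\<beta>. \<beta> \<in> {0<..<1} \<Longrightarrow> \<bar>f \<beta>\<bar> \<le> B"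
  shows "integrable uniform01 f"
proof -
  interpret prob_space uniform01 by (rule prob_space_uniform01)
  show ?thesis
    by (rule integrable_const_bound[where B=B])
      (use assms in \<open>auto simp: space_uniform01 measurable_uniform01I\<close>)
qed

lemma integral_uniform01_indicator_Ioc:
  assumes "0 \<le> l" "l \<le> u" "u \<le> 1"
  shows "integral\<^sup>L uniform01 (\<lambda>\<beta>. indicator {l<..u} \<beta> * c) = c * (u - l)"
proof -
  interpret prob_space uniform01 by (rule prob_space_uniform01)
  have S: "{l<..u} \<inter> {0<..<1} \<in> sets uniform01"
    by (auto simp: uniform01_def sets_restrict_space image_iff intro!: bexI[of _ "{l<..u}"])
  have "integral\<^sup>L uniform01 (\<lambda>\<beta>. indicator {l<..u} \<beta> * c) =
      integral\<^sup>L uniform01 (\<lambda>\<beta>. indicator ({l<..u} \<inter> {0<..<1}) \<beta> * c)"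
    by (rule Bochner_Integration.integral_cong) (auto simp: space_uniform01 indicator_def)
  also have "\<dots> = c * measure lborel ({l<..u} \<inter> {0<..1})"
    using S by (simp add: measure_uniform01)
  also have "{l<..u} \<inter> {0<..1} = {l<..u}" using assms by auto
  finally show ?thesis using assms by simp
qed

lemma measure_le_eq_cdf:
  assumes "X \<in> borel_measurable M"
  shows "measure M {\<omega>\<in>space M. X \<omega> \<le> x} = cdf (distr M borel X) x"
  using assms by (simp add: cdf_def measure_distr vimage_def Int_def conj_commute)

lemma cdf_distr_unit_interval:
  assumes N: "prob_space N" "X \<in> borel_measurable N"
    and range: "\<And>\<omega>. \<omega> \<in> space N \<Longrightarrow> 0 \<le> X \<omega> \<and> X \<omega> \<le> 1"
    and measure_le: "\<And>y. 0 \<le> y \<Longrightarrow> y \<le> 1 \<Longrightarrow> measure N {\<omega>\<in>space N. X \<omega> \<le> y} = y"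
  shows "cdf (distr N borel X) y = max 0 (min y 1)"
proof -
  note cdf = measure_le_eq_cdf[OF N(2), symmetric]
  consider "y < 0" | "0 \<le> y" "y \<le> 1" | "1 < y" by linarith
  then show ?thesis
  proof cases
    case 1
    then have empty: "{\<omega>\<in>space N. X \<omega> \<le> y} = {}" using range by force
    show ?thesis unfolding cdf empty using 1 by simp
  next
    case 2
    then show ?thesis using cdf measure_le by simp
  next
    case 3
    then have full: "{\<omega>\<in>space N. X \<omega> \<le> y} = space N" using range by force
    show ?thesis unfolding cdf full using 3 prob_space.prob_space[OF N(1)] by simp
  qed
qed

lemma distr_eq_uniform01I:
  assumes N: "prob_space N" "X \<in> borel_measurable N"
    and range: "\<And>\<omega>. \<omega> \<in> space N \<Longrightarrow> 0 \<le> X \<omega> \<and> X \<omega> \<le> 1"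
    and measure_le: "\<And>y. 0 \<le> y \<Longrightarrow> y \<le> 1 \<Longrightarrow> measure N {\<omega>\<in>space N. X \<omega> \<le> y} = y"
  shows "distr N borel X = distr uniform01 borel (\<lambda>x. x)"
proof (rule cdf_unique)
  have id: "(\<lambda>x. x) \<in> borel_measurable uniform01" by (simp add: measurable_uniform01I)
  have "measure uniform01 {\<beta>\<in>space uniform01. \<beta> \<le> y} = y" if "0 \<le> y" "y \<le> 1" for y
  proof -
    have "{\<beta>\<in>space uniform01. \<beta> \<le> y} = {..y} \<inter> {0<..<1}" by (auto simp: space_uniform01)
    moreover have "{..y} \<inter> {0<..1} = {0<..y}" using that by auto
    ultimately show ?thesis using that by (simp add: measure_uniform01)
  qed
  then have "cdf (distr uniform01 borel (\<lambda>x. x)) y = max 0 (min y 1)" for y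
    by (intro cdf_distr_unit_interval[OF prob_space_uniform01 id]) (auto simp: space_uniform01)
  moreover have "cdf (distr N borel X) y = max 0 (min y 1)" for y
    by (rule cdf_distr_unit_interval[OF assms])
  ultimately show "cdf (distr N borel X) = cdf (distr uniform01 borel (\<lambda>x. x))" by auto
  show "real_distribution (distr N borel X)"
    using prob_space.real_distribution_distr[OF N] .
  show "real_distribution (distr uniform01 borel (\<lambda>x. x))"
    using prob_space.real_distribution_distr[OF prob_space_uniform01 id] .
qed

lemma distr_compose_eq:
  assumes "X \<in> borel_measurable M" "Y \<in> borel_measurable N" "f \<in> borel_measurable borel"
    and "distr M borel X = distr N borel Y"
  shows "distr M borel (\<lambda>\<omega>. f (X \<omega>)) = distr N borel (\<lambda>\<omega>. f (Y \<omega>))"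
proof -
  have "distr M borel (\<lambda>\<omega>. f (X \<omega>)) = distr (distr M borel X) borel f"
    using assms by (subst distr_distr) (auto simp: comp_def)
  also have "\<dots> = distr N borel (\<lambda>\<omega>. f (Y \<omega>))"
    using assms by (subst assms(4), subst distr_distr) (auto simp: comp_def)
  finally show ?thesis .
qed

section \<open>A uniform random variable on an atomless space\<close>

context atomless_prob_space
begin

definition halve :: "'a set \<Rightarrow> 'a set" where
  "halve A = (SOME B. B \<in> sets M \<and> B \<subseteq> A \<and> measure M B = measure M A / 2)"

lemma halve_spec:
  assumes "A \<in> sets M"
  shows "halve A \<in> sets M" "halve A \<subseteq> A" "measure M (halve A) = measure M A / 2"
proof -
  have "\<exists>B. B \<in> sets M \<and> B \<subseteq> A \<and> measure M B = measure M A / 2"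
    using exists_subset_measure_eq[OF assms, of "measure M A / 2"] by auto
  from someI_ex[OF this]
  show "halve A \<in> sets M" "halve A \<subseteq> A" "measure M (halve A) = measure M A / 2"
    unfolding halve_def by blast+
qed

text \<open>The level-m cells \<open>dyadic_cell m k\<close>, \<open>k < 2 ^ m\<close>, partition the space into sets of
  measure \<open>1 / 2 ^ m\<close>; each cell is split into its two halves at the next level, so
  \<open>dyadic_index m \<omega>\<close> holds the first m binary digits of \<open>uniform_rv \<omega>\<close>.\<close>

primrec dyadic_index :: "nat \<Rightarrow> 'a \<Rightarrow> nat" where
  "dyadic_index 0 \<omega> = 0"
| "dyadic_index (Suc m) \<omega> = 2 * dyadic_index m \<omega> +
     (if \<omega> \<in> halve {\<omega>'\<in>space M. dyadic_index m \<omega>' = dyadic_index m \<omega>} then 0 else 1)"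

definition dyadic_cell :: "nat \<Rightarrow> nat \<Rightarrow> 'a set" where
  "dyadic_cell m k = {\<omega>\<in>space M. dyadic_index m \<omega> = k}"

definition uniform_rv :: "'a \<Rightarrow> real" where
  "uniform_rv \<omega> = (SUP m. real (dyadic_index m \<omega>) / 2 ^ m)"

lemma dyadic_cell_Suc_even:
  assumes "dyadic_cell m j \<in> sets M"
  shows "dyadic_cell (Suc m) (2 * j) = halve (dyadic_cell m j)"
  using halve_spec(2)[OF assms] by (auto simp: dyadic_cell_def) presburger+

lemma dyadic_cell_Suc_odd:
  "dyadic_cell (Suc m) (2 * j + 1) = dyadic_cell m j - halve (dyadic_cell m j)"
  by (auto simp: dyadic_cell_def) presburger+

lemma dyadic_cell_spec:
  "dyadic_cell m k \<in> sets M \<and> measure M (dyadic_cell m k) = (if k < 2 ^ m then 1 / 2 ^ m else 0)"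
proof (induction m arbitrary: k)
  case 0
  show ?case by (auto simp: dyadic_cell_def prob_space)
next
  case (Suc m)
  have cell: "dyadic_cell m j \<in> sets M" for j using Suc.IH by blast
  obtain j where "k = 2 * j \<or> k = 2 * j + 1" by (metis oddE evenE)
  then show ?case
  proof
    assume k: "k = 2 * j"
    show ?case using halve_spec[OF cell[of j]] Suc.IH[of j]
      unfolding k dyadic_cell_Suc_even[OF cell[of j]] by auto
  next
    assume k: "k = 2 * j + 1"
    have "measure M (dyadic_cell m j - halve (dyadic_cell m j)) =
        measure M (dyadic_cell m j) - measure M (halve (dyadic_cell m j))"
      using halve_spec[OF cell[of j]] cell[of j] by (intro finite_measure_Diff) auto
    then show ?case using halve_spec[OF cell[of j]] Suc.IH[of j]
      unfolding k dyadic_cell_Suc_odd by auto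
  qed
qed

lemma sets_dyadic_index_less: "{\<omega>\<in>space M. dyadic_index m \<omega> < j} \<in> sets M"
proof -
  have "{\<omega>\<in>space M. dyadic_index m \<omega> < j} = (\<Union>k<j. dyadic_cell m k)"
    by (auto simp: dyadic_cell_def)
  then show ?thesis using dyadic_cell_spec by auto
qed

lemma measure_dyadic_index_less:
  assumes "j \<le> 2 ^ m"
  shows "measure M {\<omega>\<in>space M. dyadic_index m \<omega> < j} = real j / 2 ^ m"
  using assms
proof (induction j)
  case (Suc j)
  have split: "{\<omega>\<in>space M. dyadic_index m \<omega> < Suc j} =
      {\<omega>\<in>space M. dyadic_index m \<omega> < j} \<union> dyadic_cell m j"
    by (auto simp: dyadic_cell_def)
  have "measure M {\<omega>\<in>space M. dyadic_index m \<omega> < Suc j} =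
      measure M {\<omega>\<in>space M. dyadic_index m \<omega> < j} + measure M (dyadic_cell m j)"
    unfolding split using dyadic_cell_spec sets_dyadic_index_less
    by (intro finite_measure_Union) (auto simp: dyadic_cell_def)
  then show ?case using Suc dyadic_cell_spec[of m j] by (auto simp: field_simps)
qed simp

lemma dyadic_index_measurable: "dyadic_index m \<in> measurable M (count_space UNIV)"
proof (subst measurable_count_space_eq2_countable, intro conjI ballI)
  fix k
  have "dyadic_index m -` {k} \<inter> space M = dyadic_cell m k" by (auto simp: dyadic_cell_def)
  then show "dyadic_index m -` {k} \<inter> space M \<in> sets M" using dyadic_cell_spec by simp
qed auto

lemma dyadic_lower_le_upper:
  "real (dyadic_index m \<omega>) / 2 ^ m \<le> (real (dyadic_index m' \<omega>) + 1) / 2 ^ m'"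
proof -
  let ?l = "\<lambda>m. real (dyadic_index m \<omega>) / 2 ^ m"
    and ?u = "\<lambda>m. (real (dyadic_index m \<omega>) + 1) / 2 ^ m"
  have "incseq ?l"
    by (rule incseq_SucI) (simp add: field_simps)
  moreover have "decseq ?u"
    by (rule decseq_SucI) (simp add: field_simps)
  ultimately have "?l m \<le> ?l (max m m')" "?u (max m m') \<le> ?u m'"
    by (auto simp: incseq_def decseq_def)
  moreover have "?l (max m m') \<le> ?u (max m m')" by (simp add: divide_right_mono)
  ultimately show ?thesis by linarith
qed

lemma bdd_above_dyadic_lower: "bdd_above (range (\<lambda>m. real (dyadic_index m \<omega>) / 2 ^ m))"
  using dyadic_lower_le_upper
  by (auto intro!: bdd_aboveI[of _ "(real (dyadic_index 0 \<omega>) + 1) / 2 ^ 0"])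

lemma uniform_rv_dyadic_bounds:
  "real (dyadic_index m \<omega>) / 2 ^ m \<le> uniform_rv \<omega>"
  "uniform_rv \<omega> \<le> (real (dyadic_index m \<omega>) + 1) / 2 ^ m"
proof -
  show "real (dyadic_index m \<omega>) / 2 ^ m \<le> uniform_rv \<omega>"
    unfolding uniform_rv_def by (rule cSUP_upper[OF _ bdd_above_dyadic_lower]) auto
  show "uniform_rv \<omega> \<le> (real (dyadic_index m \<omega>) + 1) / 2 ^ m"
    unfolding uniform_rv_def by (rule cSUP_least) (auto intro: dyadic_lower_le_upper)
qed

lemma uniform_rv_range: "0 \<le> uniform_rv \<omega>" "uniform_rv \<omega> \<le> 1"
  using uniform_rv_dyadic_bounds[where m=0 and \<omega>=\<omega>] by auto

lemma uniform_rv_measurable: "uniform_rv \<in> borel_measurable M"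
  unfolding uniform_rv_def
proof (rule borel_measurable_cSUP)
  fix m
  show "(\<lambda>\<omega>. real (dyadic_index m \<omega>) / 2 ^ m) \<in> borel_measurable M"
    using measurable_compose[OF dyadic_index_measurable[of m], of "\<lambda>k. real k / 2 ^ m" borel]
    by (simp add: borel_measurable_count_space)
qed (simp_all add: bdd_above_dyadic_lower)

lemma dyadic_index_less_imp_uniform_rv_le:
  "dyadic_index m \<omega> < j \<Longrightarrow> uniform_rv \<omega> \<le> real j / 2 ^ m"
  using uniform_rv_dyadic_bounds(2)[of \<omega> m] by (simp add: divide_right_mono order.trans)

lemma uniform_rv_less_imp_dyadic_index_less:
  assumes "uniform_rv \<omega> < real j / 2 ^ m"
  shows "dyadic_index m \<omega> < j"
proof -
  have "real (dyadic_index m \<omega>) / 2 ^ m < real j / 2 ^ m"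
    using uniform_rv_dyadic_bounds(1)[of m \<omega>] assms by linarith
  then show ?thesis by (simp add: divide_less_cancel)
qed

lemma measure_dyadic_index_less_le: "measure M {\<omega>\<in>space M. dyadic_index m \<omega> < j} \<le> real j / 2 ^ m"
proof (cases "j \<le> 2 ^ m")
  case False
  then have "(2::real) ^ m < real j" by (metis not_le of_nat_less_iff of_nat_numeral of_nat_power)
  then have "1 \<le> real j / 2 ^ m" by (simp add: le_divide_eq)
  then show ?thesis by (meson order.trans prob_le_1)
qed (simp add: measure_dyadic_index_less)

lemma measure_uniform_rv_le_approx:
  assumes y: "0 \<le> y" "y \<le> 1"
  shows "\<bar>measure M {\<omega>\<in>space M. uniform_rv \<omega> \<le> y} - y\<bar> \<le> 1 / 2 ^ m"
proof -
  have sets: "{\<omega>\<in>space M. uniform_rv \<omega> \<le> y} \<in> sets M" using uniform_rv_measurable by measurable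
  define j where "j = nat \<lfloor>y * 2 ^ m\<rfloor>"
  have j: "real j / 2 ^ m \<le> y" "y < (real j + 1) / 2 ^ m"
    using y by (auto simp: j_def pos_divide_le_eq pos_less_divide_eq)
  have "j \<le> 2 ^ m"
  proof -
    have "y * 2 ^ m \<le> 2 ^ m" using y by (intro mult_left_le_one_le) auto
    moreover have "real j \<le> y * 2 ^ m" using j(1) by (simp add: pos_divide_le_eq)
    ultimately have "real j \<le> 2 ^ m" by linarith
    then show ?thesis by (metis of_nat_le_iff of_nat_numeral of_nat_power)
  qed
  moreover have "{\<omega>\<in>space M. dyadic_index m \<omega> < j} \<subseteq> {\<omega>\<in>space M. uniform_rv \<omega> \<le> y}"
  proof safe
    fix \<omega> assume "dyadic_index m \<omega> < j"
    then show "uniform_rv \<omega> \<le> y" using dyadic_index_less_imp_uniform_rv_le j(1) by fastforce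
  qed
  then have "measure M {\<omega>\<in>space M. dyadic_index m \<omega> < j} \<le> measure M {\<omega>\<in>space M. uniform_rv \<omega> \<le> y}"
    using sets by (rule finite_measure_mono)
  ultimately have lower: "real j / 2 ^ m \<le> measure M {\<omega>\<in>space M. uniform_rv \<omega> \<le> y}"
    by (simp add: measure_dyadic_index_less)
  have "{\<omega>\<in>space M. uniform_rv \<omega> \<le> y} \<subseteq> {\<omega>\<in>space M. dyadic_index m \<omega> < Suc j}"
  proof safe
    fix \<omega> assume "uniform_rv \<omega> \<le> y"
    then have "uniform_rv \<omega> < real (Suc j) / 2 ^ m" using j(2) by (simp add: add.commute)
    then show "dyadic_index m \<omega> < Suc j" by (rule uniform_rv_less_imp_dyadic_index_less)
  qed
  then have "measure M {\<omega>\<in>space M. uniform_rv \<omega> \<le> y} \<le>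
      measure M {\<omega>\<in>space M. dyadic_index m \<omega> < Suc j}"
    using sets_dyadic_index_less by (rule finite_measure_mono)
  also have "\<dots> \<le> real (Suc j) / 2 ^ m" by (rule measure_dyadic_index_less_le)
  finally have upper: "measure M {\<omega>\<in>space M. uniform_rv \<omega> \<le> y} \<le> (real j + 1) / 2 ^ m"
    by (simp add: add.commute)
  have "(real j + 1) / 2 ^ m = real j / 2 ^ m + 1 / 2 ^ m" by (simp add: add_divide_distrib)
  then show ?thesis using lower upper j by linarith
qed

lemma measure_uniform_rv_le:
  assumes "0 \<le> y" "y \<le> 1"
  shows "measure M {\<omega>\<in>space M. uniform_rv \<omega> \<le> y} = y"
proof (rule ccontr)
  assume "measure M {\<omega>\<in>space M. uniform_rv \<omega> \<le> y} \<noteq> y"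
  then obtain m where "(1/2::real) ^ m < \<bar>measure M {\<omega>\<in>space M. uniform_rv \<omega> \<le> y} - y\<bar>"
    using real_arch_pow_inv[of "\<bar>measure M {\<omega>\<in>space M. uniform_rv \<omega> \<le> y} - y\<bar>" "1/2"] by auto
  then show False
    using measure_uniform_rv_le_approx[OF assms, of m] by (auto simp: power_one_over)
qed

lemma distr_uniform_rv: "distr M borel uniform_rv = distr uniform01 borel (\<lambda>x. x)"
  by (rule distr_eq_uniform01I[OF prob_space_axioms uniform_rv_measurable])
    (use uniform_rv_range measure_uniform_rv_le in auto)

end

section \<open>Quantile functions\<close>

text \<open>The value 0 outside \<open>(0, 1)\<close> is a junk value: \<open>quantile M X\<close> is monotone only on
  \<open>(0, 1)\<close>, see \<open>monotone_quantile_extension\<close>.\<close>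

definition quantile :: "'a measure \<Rightarrow> ('a \<Rightarrow> real) \<Rightarrow> real \<Rightarrow> real" where
  "quantile M X \<beta> = (if \<beta> \<in> {0<..<1} then Inf {x. \<beta> \<le> cdf (distr M borel X) x} else 0)"

lemma Inf_ereal_image_atLeast: "Inf (ereal ` {x. c \<le> x}) = ereal c"
  by (rule antisym) (auto intro: Inf_lower Inf_greatest)

context prob_space
begin

lemma cdf_distribution_distr: "X \<in> borel_measurable M \<Longrightarrow> cdf_distribution (distr M borel X)"
  unfolding cdf_distribution_def by (rule real_distribution_distr)

lemma quantile_le_iff:
  assumes "X \<in> borel_measurable M" "0 < \<beta>" "\<beta> < 1"
  shows "quantile M X \<beta> \<le> x \<longleftrightarrow> \<beta> \<le> measure M {\<omega>\<in>space M. X \<omega> \<le> x}"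
proof -
  interpret D: cdf_distribution "distr M borel X"
    using cdf_distribution_distr[OF assms(1)] .
  show ?thesis
    using D.pseudoinverse[OF assms(2,3), of x] assms by (simp add: quantile_def measure_le_eq_cdf)
qed

lemma VaR_eq_quantile:
  assumes "X \<in> borel_measurable M" "0 < \<beta>" "\<beta> < 1"
  shows "VaR M \<beta> X = ereal (quantile M X \<beta>)"
proof -
  have "{x. \<beta> \<le> measure M {\<omega> \<in> space M. X \<omega> \<le> x}} = {x. quantile M X \<beta> \<le> x}"
    using quantile_le_iff[OF assms] by auto
  then show ?thesis by (simp add: VaR_def Inf_ereal_image_atLeast)
qed

lemma quantile_measurable:
  assumes "X \<in> borel_measurable M"
  shows "quantile M X \<in> borel_measurable borel"
proof -
  interpret D: cdf_distribution "distr M borel X"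
    using cdf_distribution_distr[OF assms] .
  have "(\<lambda>\<beta>. if \<beta> \<in> {0<..<1} then Inf {x. \<beta> \<le> cdf (distr M borel X) x} else 0)
      \<in> borel_measurable borel"
    using D.measurable_CI by (subst (asm) measurable_restrict_space_iff) auto
  then show ?thesis by (simp add: quantile_def[abs_def])
qed

lemma distr_quantile:
  assumes "X \<in> borel_measurable M"
  shows "distr uniform01 borel (quantile M X) = distr M borel X"
proof -
  interpret D: cdf_distribution "distr M borel X"
    using cdf_distribution_distr[OF assms] .
  have "distr uniform01 borel (quantile M X) =
      distr uniform01 borel (\<lambda>\<beta>. Inf {x. \<beta> \<le> cdf (distr M borel X) x})"
    by (rule distr_cong) (auto simp: space_uniform01 quantile_def)
  then show ?thesis using D.distr_I_eq_M by (simp add: uniform01_def)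
qed

lemma quantile_mono:
  assumes "X \<in> borel_measurable M" "0 < \<beta>" "\<beta> \<le> \<beta>'" "\<beta>' < 1"
  shows "quantile M X \<beta> \<le> quantile M X \<beta>'"
proof -
  have "\<beta>' \<le> measure M {\<omega>\<in>space M. X \<omega> \<le> quantile M X \<beta>'}"
    using quantile_le_iff[OF assms(1), of \<beta>' "quantile M X \<beta>'"] assms by simp
  then show ?thesis using quantile_le_iff[OF assms(1), of \<beta>] assms by simp
qed

lemma abs_quantile_le:
  assumes "X \<in> borel_measurable M" "AE \<omega> in M. \<bar>X \<omega>\<bar> \<le> C" "0 \<le> C"
  shows "\<bar>quantile M X \<beta>\<bar> \<le> C"
proof (cases "0 < \<beta> \<and> \<beta> < 1")
  case True
  have "AE \<omega> in M. X \<omega> \<le> C" using assms(2) by eventually_elim auto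
  then have "measure M {\<omega>\<in>space M. X \<omega> \<le> C} = 1"
    using assms(1) by (subst prob_Collect_eq_1) auto
  then have upper: "quantile M X \<beta> \<le> C"
    using quantile_le_iff[OF assms(1)] True by simp
  have "- C \<le> quantile M X \<beta>"
  proof (rule ccontr)
    assume less: "\<not> - C \<le> quantile M X \<beta>"
    have "AE \<omega> in M. \<not> X \<omega> \<le> quantile M X \<beta>" using assms(2) by eventually_elim (use less in auto)
    then have "measure M {\<omega>\<in>space M. X \<omega> \<le> quantile M X \<beta>} = 0"
      using assms(1) by (subst prob_Collect_eq_0) auto
    then show False using quantile_le_iff[OF assms(1), of \<beta> "quantile M X \<beta>"] True by simp
  qed
  with upper show ?thesis by auto
qed (use assms(3) in \<open>auto simp: quantile_def\<close>)

lemma monotone_quantile_extension: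
  assumes "X \<in> borel_measurable M" "AE \<omega> in M. \<bar>X \<omega>\<bar> \<le> C" "0 \<le> C"
  obtains q where "mono q" "\<And>x. \<bar>q x\<bar> \<le> C" "\<And>\<beta>. \<beta> \<in> {0<..<1} \<Longrightarrow> q \<beta> = quantile M X \<beta>"
proof
  let ?q = "\<lambda>\<beta>. if \<beta> \<le> 0 then - C else if 1 \<le> \<beta> then C else quantile M X \<beta>"
  note bound = abs_quantile_le[OF assms]
  show "mono ?q"
  proof (rule monoI)
    fix x y :: real assume "x \<le> y"
    then show "?q x \<le> ?q y"
      using bound[of x] bound[of y] quantile_mono[OF assms(1), of x y] by (auto simp: abs_le_iff)
  qed
  show "\<bar>?q x\<bar> \<le> C" for x using bound[of x] assms(3) by auto
qed auto

lemma integral_quantile: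
  fixes f :: "real \<Rightarrow> real"
  assumes "X \<in> borel_measurable M" "f \<in> borel_measurable borel"
  shows "integral\<^sup>L M (\<lambda>\<omega>. f (X \<omega>)) = integral\<^sup>L uniform01 (\<lambda>\<beta>. f (quantile M X \<beta>))"
proof -
  have "integral\<^sup>L M (\<lambda>\<omega>. f (X \<omega>)) = integral\<^sup>L (distr M borel X) f"
    using assms by (subst integral_distr) auto
  also have "\<dots> = integral\<^sup>L (distr uniform01 borel (quantile M X)) f"
    by (simp add: distr_quantile[OF assms(1)])
  also have "\<dots> = integral\<^sup>L uniform01 (\<lambda>\<beta>. f (quantile M X \<beta>))"
    by (rule integral_distr)
      (use assms quantile_measurable[OF assms(1)] in \<open>auto simp: measurable_uniform01I\<close>)
  finally show ?thesis .
qed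

end

section \<open>Expected shortfall\<close>

definition tail_integral :: "'a measure \<Rightarrow> real \<Rightarrow> ('a \<Rightarrow> real) \<Rightarrow> real" where
  "tail_integral M \<alpha> X = integral\<^sup>L uniform01 (\<lambda>\<beta>. indicator {\<alpha><..1} \<beta> * quantile M X \<beta>)"

lemma LinfE:
  assumes "X \<in> Linf M"
  obtains C where "X \<in> borel_measurable M" "0 \<le> C" "AE \<omega> in M. \<bar>X \<omega>\<bar> \<le> C"
proof -
  from assms obtain C where "X \<in> borel_measurable M" "AE \<omega> in M. \<bar>X \<omega>\<bar> \<le> C"
    by (auto simp: Linf_def)
  moreover from this(2) have "AE \<omega> in M. \<bar>X \<omega>\<bar> \<le> max C 0" by eventually_elim auto
  ultimately show ?thesis using that[of "max C 0"] by auto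
qed

lemma Linf_convex_combination:
  assumes "X \<in> Linf M" "Y \<in> Linf M" "0 \<le> \<gamma>" "\<gamma> \<le> 1"
  shows "(\<lambda>\<omega>. \<gamma> * X \<omega> + (1 - \<gamma>) * Y \<omega>) \<in> Linf M"
proof -
  obtain C where X: "X \<in> borel_measurable M" "0 \<le> C" "AE \<omega> in M. \<bar>X \<omega>\<bar> \<le> C"
    using LinfE[OF assms(1)] by blast
  obtain D where Y: "Y \<in> borel_measurable M" "0 \<le> D" "AE \<omega> in M. \<bar>Y \<omega>\<bar> \<le> D"
    using LinfE[OF assms(2)] by blast
  have "AE \<omega> in M. \<bar>\<gamma> * X \<omega> + (1 - \<gamma>) * Y \<omega>\<bar> \<le> C + D"
    using X(3) Y(3)
  proof eventually_elim
    case (elim \<omega>)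
    have "\<bar>\<gamma> * X \<omega> + (1 - \<gamma>) * Y \<omega>\<bar> \<le> \<bar>\<gamma> * X \<omega>\<bar> + \<bar>(1 - \<gamma>) * Y \<omega>\<bar>"
      by (rule abs_triangle_ineq)
    also have "\<dots> = \<gamma> * \<bar>X \<omega>\<bar> + (1 - \<gamma>) * \<bar>Y \<omega>\<bar>"
      using assms(3,4) by (simp add: abs_mult)
    also have "\<dots> \<le> 1 * C + 1 * D"
      using elim assms(3,4) X(2) Y(2) by (intro add_mono mult_mono) auto
    finally show ?case by simp
  qed
  then show ?thesis using X(1) Y(1) by (auto simp: Linf_def)
qed

lemma ES_one_eq_VaR: "ES M 1 = VaR M 1"
  by (simp add: ES_def fun_eq_iff)

lemma VaR_eq_of_distr_eq:
  assumes "X \<in> borel_measurable M" "Y \<in> borel_measurable M" "distr M borel X = distr M borel Y"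
  shows "VaR M \<beta> X = VaR M \<beta> Y"
proof -
  have "measure M {\<omega>\<in>space M. X \<omega> \<le> x} = measure M {\<omega>\<in>space M. Y \<omega> \<le> x}" for x
    using assms by (simp add: measure_le_eq_cdf)
  then show ?thesis by (simp add: VaR_def)
qed

lemma ES_law_invariant: "law_invariant M (ES M \<alpha>)"
  unfolding law_invariant_def
proof (intro ballI impI)
  fix X Y assume "X \<in> Linf M" "Y \<in> Linf M" "distr M borel X = distr M borel Y"
  then have "VaR M \<beta> X = VaR M \<beta> Y" for \<beta>
    by (intro VaR_eq_of_distr_eq) (auto simp: Linf_def)
  then show "ES M \<alpha> X = ES M \<alpha> Y" by (simp add: ES_def)
qed

lemma VaR_le_VaR_plus: "VaR M \<alpha> X \<le> VaR_plus M \<alpha> X"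
  unfolding VaR_def VaR_plus_def by (rule Inf_superset_mono) auto

lemma VaR_plus_le_VaR:
  assumes "\<beta> < \<alpha>"
  shows "VaR_plus M \<beta> X \<le> VaR M \<alpha> X"
  unfolding VaR_def VaR_plus_def by (rule Inf_superset_mono) (use assms in auto)

context prob_space
begin

lemma integrable_quantile:
  assumes "X \<in> Linf M" "f \<in> borel_measurable borel" "\<And>x. \<bar>f x\<bar> \<le> 1"
  shows "integrable uniform01 (\<lambda>\<beta>. f \<beta> * quantile M X \<beta>)"
proof -
  obtain C where X: "X \<in> borel_measurable M" "0 \<le> C" "AE \<omega> in M. \<bar>X \<omega>\<bar> \<le> C"
    using LinfE[OF assms(1)] by blast
  have "\<bar>f \<beta> * quantile M X \<beta>\<bar> \<le> 1 * C" for \<beta>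
    unfolding abs_mult using assms(3) abs_quantile_le[OF X(1,3,2)] by (intro mult_mono) auto
  then show ?thesis using quantile_measurable[OF X(1)] assms(2)
    by (intro integrable_uniform01_bounded[where B=C]) auto
qed

lemma ES_eq_tail_integral:
  assumes "X \<in> borel_measurable M" "0 \<le> \<alpha>" "\<alpha> < 1"
  shows "ES M \<alpha> X = ereal (tail_integral M \<alpha> X / (1 - \<alpha>))"
proof -
  have "(LBINT \<beta>=ereal \<alpha>..ereal 1. real_of_ereal (VaR M \<beta> X))
      = integral\<^sup>L lborel (\<lambda>\<beta>. indicator {\<alpha><..<1} \<beta> * real_of_ereal (VaR M \<beta> X))"
    using assms by (simp add: interval_integral_Ioo set_lebesgue_integral_def)
  also have "\<dots> = integral\<^sup>L lborel
      (\<lambda>\<beta>. indicator {0<..<1} \<beta> *\<^sub>R (indicator {\<alpha><..1} \<beta> * quantile M X \<beta>))"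
    by (rule Bochner_Integration.integral_cong)
      (use VaR_eq_quantile[OF assms(1)] assms(2) in \<open>auto simp: indicator_def\<close>)
  also have "\<dots> = tail_integral M \<alpha> X"
    unfolding tail_integral_def uniform01_def by (subst integral_restrict_space) auto
  finally show ?thesis using assms by (simp add: ES_def)
qed

lemma VaR_plus_le_quantile:
  assumes "X \<in> borel_measurable M" "\<alpha> < \<beta>" "0 < \<beta>" "\<beta> < 1"
  shows "VaR_plus M \<alpha> X \<le> ereal (quantile M X \<beta>)"
proof -
  have "\<beta> \<le> measure M {\<omega>\<in>space M. X \<omega> \<le> quantile M X \<beta>}"
    using quantile_le_iff[OF assms(1,3,4), of "quantile M X \<beta>"] by simp
  then show ?thesis
    using assms(2) unfolding VaR_plus_def by (auto intro: Inf_lower)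
qed

lemma VaR_plus_le_ES:
  assumes "X \<in> Linf M" "0 \<le> \<alpha>" "\<alpha> < 1"
  shows "VaR_plus M \<alpha> X \<le> ES M \<alpha> X"
proof (cases "VaR_plus M \<alpha> X")
  case (real v)
  have X: "X \<in> borel_measurable M" using assms(1) by (simp add: Linf_def)
  have "v * (1 - \<alpha>) = integral\<^sup>L uniform01 (\<lambda>\<beta>. indicator {\<alpha><..1} \<beta> * v)"
    by (subst integral_uniform01_indicator_Ioc) (use assms in auto)
  also have "\<dots> \<le> tail_integral M \<alpha> X"
    unfolding tail_integral_def
  proof (rule integral_mono)
    show "integrable uniform01 (\<lambda>\<beta>. indicator {\<alpha><..1} \<beta> * v)"
      by (rule integrable_uniform01_bounded[where B="\<bar>v\<bar>"]) (auto simp: indicator_def)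
    show "integrable uniform01 (\<lambda>\<beta>. indicator {\<alpha><..1} \<beta> * quantile M X \<beta>)"
      by (rule integrable_quantile[OF assms(1)]) auto
    show "indicator {\<alpha><..1} \<beta> * v \<le> indicator {\<alpha><..1} \<beta> * quantile M X \<beta>"
      if "\<beta> \<in> space uniform01" for \<beta>
      using that VaR_plus_le_quantile[OF X, of \<alpha> \<beta>] real
      by (auto simp: indicator_def space_uniform01)
  qed
  finally show ?thesis
    using real ES_eq_tail_integral[OF X assms(2,3)] assms(3) by (simp add: field_simps)
qed (use VaR_plus_le_quantile[of X \<alpha> "(\<alpha> + 1) / 2"] assms in \<open>auto simp: Linf_def\<close>)

lemma VaR_le_ES:
  assumes "X \<in> Linf M" "0 < \<alpha>" "\<alpha> \<le> 1"
  shows "VaR M \<alpha> X \<le> ES M \<alpha> X"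
  using order.trans[OF VaR_le_VaR_plus VaR_plus_le_ES[OF assms(1)]] assms
  by (cases "\<alpha> = 1") (auto simp: ES_one_eq_VaR)

lemma tail_integral_diff_le:
  assumes X: "X \<in> borel_measurable M" "AE \<omega> in M. \<bar>X \<omega>\<bar> \<le> C" "0 \<le> C"
    and b: "0 \<le> b" "b \<le> \<alpha>" "\<alpha> \<le> 1"
  shows "tail_integral M \<alpha> X - C * (\<alpha> - b) \<le> tail_integral M b X"
proof -
  have Linf: "X \<in> Linf M" using X by (auto simp: Linf_def)
  have C_int: "integrable uniform01 (\<lambda>\<beta>. indicator {b<..\<alpha>} \<beta> * C)"
    by (rule integrable_uniform01_bounded[where B=C]) (use X(3) in \<open>auto simp: indicator_def\<close>)
  have "tail_integral M \<alpha> X - C * (\<alpha> - b) =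
      integral\<^sup>L uniform01 (\<lambda>\<beta>. indicator {\<alpha><..1} \<beta> * quantile M X \<beta> - indicator {b<..\<alpha>} \<beta> * C)"
    unfolding tail_integral_def integral_uniform01_indicator_Ioc[OF b, symmetric]
    by (rule Bochner_Integration.integral_diff[OF integrable_quantile[OF Linf] C_int, symmetric])
      auto
  also have "\<dots> \<le> tail_integral M b X"
    unfolding tail_integral_def
  proof (rule integral_mono)
    show "integrable uniform01
        (\<lambda>\<beta>. indicator {\<alpha><..1} \<beta> * quantile M X \<beta> - indicator {b<..\<alpha>} \<beta> * C)"
      using integrable_quantile[OF Linf, of "indicator {\<alpha><..1}"] C_int by auto
    show "indicator {\<alpha><..1} \<beta> * quantile M X \<beta> - indicator {b<..\<alpha>} \<beta> * C
        \<le> indicator {b<..1} \<beta> * quantile M X \<beta>" for \<beta>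
      using abs_quantile_le[OF X, of \<beta>] b by (auto simp: indicator_def abs_le_iff)
  qed (rule integrable_quantile[OF Linf]; auto)
  finally show ?thesis .
qed

lemma integrable_excess:
  assumes "X \<in> Linf M"
  shows "integrable M (\<lambda>\<omega>. max (X \<omega> - t) 0)"
proof -
  obtain C where X: "X \<in> borel_measurable M" "0 \<le> C" "AE \<omega> in M. \<bar>X \<omega>\<bar> \<le> C"
    using LinfE[OF assms] by blast
  show ?thesis
  proof (rule integrable_const_bound[where B="C + \<bar>t\<bar>"])
    show "AE \<omega> in M. norm (max (X \<omega> - t) 0) \<le> C + \<bar>t\<bar>"
      using X(3) by eventually_elim auto
  qed (use X(1) in auto)
qed

lemma abs_excess_quantile_le:
  assumes "X \<in> borel_measurable M" "0 \<le> C" "AE \<omega> in M. \<bar>X \<omega>\<bar> \<le> C"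
  shows "\<bar>max (quantile M X \<beta> - t) 0\<bar> \<le> C + \<bar>t\<bar>"
  using abs_quantile_le[OF assms(1,3,2), of \<beta>] by (auto simp: abs_le_iff max_def)

text \<open>The Rockafellar-Uryasev representation
  \<open>tail_integral M \<alpha> X = min\<^sub>t (t * (1 - \<alpha>) + E[max (X - t) 0])\<close>; the minimum is
  attained at the \<open>\<alpha>\<close>-quantile (at a lower bound of X if \<open>\<alpha> = 0\<close>).\<close>

lemma tail_integral_excess_split:
  assumes "X \<in> Linf M" "0 \<le> \<alpha>" "\<alpha> \<le> 1"
  shows "integral\<^sup>L uniform01 (\<lambda>\<beta>. indicator {\<alpha><..1} \<beta> * t + max (quantile M X \<beta> - t) 0)
    = t * (1 - \<alpha>) + integral\<^sup>L M (\<lambda>\<omega>. max (X \<omega> - t) 0)"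
proof -
  obtain C where X: "X \<in> borel_measurable M" "0 \<le> C" "AE \<omega> in M. \<bar>X \<omega>\<bar> \<le> C"
    using LinfE[OF assms(1)] by blast
  have "integrable uniform01 (\<lambda>\<beta>. indicator {\<alpha><..1} \<beta> * t)"
    by (rule integrable_uniform01_bounded[where B="\<bar>t\<bar>"]) (auto simp: indicator_def)
  moreover have "integrable uniform01 (\<lambda>\<beta>. max (quantile M X \<beta> - t) 0)"
    by (rule integrable_uniform01_bounded[where B="C + \<bar>t\<bar>"])
      (use quantile_measurable[OF X(1)] abs_excess_quantile_le[OF X] in auto)
  ultimately show ?thesis
    using integral_uniform01_indicator_Ioc[of \<alpha> 1 t] assms(2,3)
      integral_quantile[OF X(1), of "\<lambda>x. max (x - t) 0"] by simp
qed

lemma tail_integral_le_excess: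
  assumes "X \<in> Linf M" "0 \<le> \<alpha>" "\<alpha> \<le> 1"
  shows "tail_integral M \<alpha> X \<le> t * (1 - \<alpha>) + integral\<^sup>L M (\<lambda>\<omega>. max (X \<omega> - t) 0)"
  unfolding tail_integral_def tail_integral_excess_split[OF assms, symmetric]
proof (rule integral_mono)
  obtain C where X: "X \<in> borel_measurable M" "0 \<le> C" "AE \<omega> in M. \<bar>X \<omega>\<bar> \<le> C"
    using LinfE[OF assms(1)] by blast
  show "integrable uniform01 (\<lambda>\<beta>. indicator {\<alpha><..1} \<beta> * quantile M X \<beta>)"
    by (rule integrable_quantile[OF assms(1)]) auto
  show "integrable uniform01 (\<lambda>\<beta>. indicator {\<alpha><..1} \<beta> * t + max (quantile M X \<beta> - t) 0)"
  proof (rule integrable_uniform01_bounded[where B="\<bar>t\<bar> + (C + \<bar>t\<bar>)"])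
    show "\<bar>indicator {\<alpha><..1} \<beta> * t + max (quantile M X \<beta> - t) 0\<bar> \<le> \<bar>t\<bar> + (C + \<bar>t\<bar>)" for \<beta>
      using abs_excess_quantile_le[OF X, of \<beta> t]
      by (intro order.trans[OF abs_triangle_ineq add_mono]) (auto simp: indicator_def)
  qed (use quantile_measurable[OF X(1)] in auto)
qed (auto simp: indicator_def)

lemma tail_integral_eq_excess:
  assumes "X \<in> Linf M" "0 \<le> \<alpha>" "\<alpha> < 1"
  obtains t where "tail_integral M \<alpha> X = t * (1 - \<alpha>) + integral\<^sup>L M (\<lambda>\<omega>. max (X \<omega> - t) 0)"
proof -
  obtain C where X: "X \<in> borel_measurable M" "0 \<le> C" "AE \<omega> in M. \<bar>X \<omega>\<bar> \<le> C"
    using LinfE[OF assms(1)] by blast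
  note bound = abs_quantile_le[OF X(1,3,2)]
  define t where "t = (if \<alpha> = 0 then - C else quantile M X \<alpha>)"
  have "tail_integral M \<alpha> X =
      integral\<^sup>L uniform01 (\<lambda>\<beta>. indicator {\<alpha><..1} \<beta> * t + max (quantile M X \<beta> - t) 0)"
    unfolding tail_integral_def
  proof (rule Bochner_Integration.integral_cong)
    fix \<beta> assume "\<beta> \<in> space uniform01"
    then have \<beta>: "0 < \<beta>" "\<beta> < 1" by (auto simp: space_uniform01)
    show "indicator {\<alpha><..1} \<beta> * quantile M X \<beta> =
        indicator {\<alpha><..1} \<beta> * t + max (quantile M X \<beta> - t) 0"
    proof (cases "\<alpha> < \<beta>")
      case True
      then have "t \<le> quantile M X \<beta>"
        using bound[of \<beta>] quantile_mono[OF X(1), of \<alpha> \<beta>] \<beta> assms(2)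
        by (cases "\<alpha> = 0") (auto simp: t_def)
      then show ?thesis using True \<beta> by (auto simp: indicator_def)
    next
      case False
      then have "quantile M X \<beta> \<le> t"
        using quantile_mono[OF X(1), of \<beta> \<alpha>] \<beta> assms by (auto simp: t_def)
      then show ?thesis using False by (auto simp: indicator_def)
    qed
  qed simp
  then show ?thesis
    using that tail_integral_excess_split[OF assms(1,2)] assms(3) by simp
qed

lemma tail_integral_convex:
  assumes "X \<in> Linf M" "Y \<in> Linf M" "0 \<le> \<alpha>" "\<alpha> < 1" "0 \<le> \<gamma>" "\<gamma> \<le> 1"
  shows "tail_integral M \<alpha> (\<lambda>\<omega>. \<gamma> * X \<omega> + (1 - \<gamma>) * Y \<omega>)
    \<le> \<gamma> * tail_integral M \<alpha> X + (1 - \<gamma>) * tail_integral M \<alpha> Y"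
proof -
  obtain s where s: "tail_integral M \<alpha> X = s * (1 - \<alpha>) + integral\<^sup>L M (\<lambda>\<omega>. max (X \<omega> - s) 0)"
    using tail_integral_eq_excess[OF assms(1,3,4)] by blast
  obtain u where u: "tail_integral M \<alpha> Y = u * (1 - \<alpha>) + integral\<^sup>L M (\<lambda>\<omega>. max (Y \<omega> - u) 0)"
    using tail_integral_eq_excess[OF assms(2,3,4)] by blast
  define t where "t = \<gamma> * s + (1 - \<gamma>) * u"
  define Z where "Z = (\<lambda>\<omega>. \<gamma> * X \<omega> + (1 - \<gamma>) * Y \<omega>)"
  have Z: "Z \<in> Linf M" unfolding Z_def by (rule Linf_convex_combination) (use assms in auto)
  note iX = integrable_excess[OF assms(1), of s] and iY = integrable_excess[OF assms(2), of u]
  have "tail_integral M \<alpha> Z \<le> t * (1 - \<alpha>) + integral\<^sup>L M (\<lambda>\<omega>. max (Z \<omega> - t) 0)"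
    using assms by (intro tail_integral_le_excess[OF Z]) auto
  also have "integral\<^sup>L M (\<lambda>\<omega>. max (Z \<omega> - t) 0) \<le>
      integral\<^sup>L M (\<lambda>\<omega>. \<gamma> * max (X \<omega> - s) 0 + (1 - \<gamma>) * max (Y \<omega> - u) 0)"
  proof (rule integral_mono)
    fix \<omega>
    have "Z \<omega> - t = \<gamma> * (X \<omega> - s) + (1 - \<gamma>) * (Y \<omega> - u)"
      by (simp add: Z_def t_def algebra_simps)
    also have "\<dots> \<le> \<gamma> * max (X \<omega> - s) 0 + (1 - \<gamma>) * max (Y \<omega> - u) 0"
      using assms(5,6) by (intro add_mono mult_left_mono) auto
    finally show "max (Z \<omega> - t) 0 \<le> \<gamma> * max (X \<omega> - s) 0 + (1 - \<gamma>) * max (Y \<omega> - u) 0"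
      using assms(5,6) by auto
  qed (use iX iY integrable_excess[OF Z] in auto)
  also have "integral\<^sup>L M (\<lambda>\<omega>. \<gamma> * max (X \<omega> - s) 0 + (1 - \<gamma>) * max (Y \<omega> - u) 0)
      = \<gamma> * integral\<^sup>L M (\<lambda>\<omega>. max (X \<omega> - s) 0) + (1 - \<gamma>) * integral\<^sup>L M (\<lambda>\<omega>. max (Y \<omega> - u) 0)"
    using iX iY by simp
  finally show ?thesis unfolding s u t_def Z_def by (simp add: algebra_simps)
qed

lemma VaR_1_quasi_convex: "quasi_convex M (VaR M 1)"
  unfolding quasi_convex_def
proof (intro ballI allI impI)
  fix X Y and \<gamma> :: real
  assume XY: "X \<in> Linf M" "Y \<in> Linf M" and \<gamma>: "0 \<le> \<gamma> \<and> \<gamma> \<le> 1"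
  define Z where "Z = (\<lambda>\<omega>. \<gamma> * X \<omega> + (1 - \<gamma>) * Y \<omega>)"
  have Z: "Z \<in> borel_measurable M"
    using Linf_convex_combination[OF XY] \<gamma> by (auto simp: Z_def Linf_def)
  have AE_le: "AE \<omega> in M. W \<omega> \<le> x" if "W \<in> Linf M" "1 \<le> measure M {\<omega>\<in>space M. W \<omega> \<le> x}" for W x
  proof -
    have "W \<in> borel_measurable M" using that(1) by (simp add: Linf_def)
    moreover have "measure M {\<omega>\<in>space M. W \<omega> \<le> x} = 1"
      using that(2) prob_le_1[of "{\<omega>\<in>space M. W \<omega> \<le> x}"] by linarith
    ultimately show ?thesis by (subst (asm) prob_Collect_eq_1) auto
  qed
  show "VaR M 1 Z \<le> max (VaR M 1 X) (VaR M 1 Y)"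
    unfolding VaR_def[of M 1 Z]
  proof (subst Inf_le_iff, intro allI impI)
    fix v assume "max (VaR M 1 X) (VaR M 1 Y) < v"
    then have "VaR M 1 X < v" "VaR M 1 Y < v" by auto
    then obtain x y where x: "1 \<le> measure M {\<omega>\<in>space M. X \<omega> \<le> x}" "ereal x < v"
      and y: "1 \<le> measure M {\<omega>\<in>space M. Y \<omega> \<le> y}" "ereal y < v"
      unfolding VaR_def Inf_less_iff by auto
    have "AE \<omega> in M. Z \<omega> \<le> max x y"
      using AE_le[OF XY(1) x(1)] AE_le[OF XY(2) y(1)]
    proof eventually_elim
      case (elim \<omega>)
      then show ?case unfolding Z_def using \<gamma> by (intro convex_bound_le) auto
    qed
    then have "measure M {\<omega>\<in>space M. Z \<omega> \<le> max x y} = 1"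
      using Z by (subst prob_Collect_eq_1) auto
    then show "\<exists>a\<in>ereal ` {x. 1 \<le> measure M {\<omega> \<in> space M. Z \<omega> \<le> x}}. a < v"
      using x(2) y(2) by (intro bexI[of _ "ereal (max x y)"]) (auto simp: max_def)
  qed
qed

lemma ES_quasi_convex_below_one:
  assumes "0 \<le> \<alpha>" "\<alpha> < 1"
  shows "quasi_convex M (ES M \<alpha>)"
  unfolding quasi_convex_def
proof (intro ballI allI impI)
  fix X Y and \<gamma> :: real
  assume XY: "X \<in> Linf M" "Y \<in> Linf M" and \<gamma>: "0 \<le> \<gamma> \<and> \<gamma> \<le> 1"
  define Z where "Z = (\<lambda>\<omega>. \<gamma> * X \<omega> + (1 - \<gamma>) * Y \<omega>)"
  have Z: "Z \<in> Linf M" unfolding Z_def by (rule Linf_convex_combination) (use XY \<gamma> in auto)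
  have ES: "ES M \<alpha> W = ereal (tail_integral M \<alpha> W / (1 - \<alpha>))" if "W \<in> Linf M" for W
    using ES_eq_tail_integral[OF _ assms] that by (auto simp: Linf_def)
  have "tail_integral M \<alpha> Z \<le> \<gamma> * tail_integral M \<alpha> X + (1 - \<gamma>) * tail_integral M \<alpha> Y"
    unfolding Z_def by (rule tail_integral_convex) (use assms XY \<gamma> in auto)
  also have "\<dots> \<le> max (tail_integral M \<alpha> X) (tail_integral M \<alpha> Y)"
    using \<gamma> by (intro convex_bound_le) auto
  finally have "tail_integral M \<alpha> Z / (1 - \<alpha>) \<le>
      max (tail_integral M \<alpha> X) (tail_integral M \<alpha> Y) / (1 - \<alpha>)"
    using assms by (intro divide_right_mono) auto
  then have "tail_integral M \<alpha> Z / (1 - \<alpha>) \<le>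
      max (tail_integral M \<alpha> X / (1 - \<alpha>)) (tail_integral M \<alpha> Y / (1 - \<alpha>))"
    using assms by (simp add: max_divide_distrib_right)
  then show "ES M \<alpha> Z \<le> max (ES M \<alpha> X) (ES M \<alpha> Y)"
    unfolding ES[OF Z] ES[OF XY(1)] ES[OF XY(2)] by (auto simp: max_def split: if_split_asm)
qed

lemma ES_quasi_convex:
  assumes "0 \<le> \<alpha>" "\<alpha> \<le> 1"
  shows "quasi_convex M (ES M \<alpha>)"
  using ES_quasi_convex_below_one[of \<alpha>] VaR_1_quasi_convex assms
  by (cases "\<alpha> = 1") (auto simp: ES_one_eq_VaR)

end

section \<open>Minimality\<close>

definition cyclic_shift :: "real \<Rightarrow> real \<Rightarrow> real \<Rightarrow> real" where
  "cyclic_shift a s \<beta> = (if \<beta> \<le> a then \<beta> else if \<beta> + s \<le> 1 then \<beta> + s else \<beta> + s - (1 - a))"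

lemma cyclic_shift_measurable [measurable]: "cyclic_shift a s \<in> borel_measurable borel"
  unfolding cyclic_shift_def by measurable

lemma measure_cyclic_shift_le:
  assumes a: "0 \<le> a" "a < 1" and s: "0 \<le> s" "s < 1 - a" and y: "0 \<le> y" "y \<le> 1"
  shows "measure uniform01 {\<beta>\<in>space uniform01. cyclic_shift a s \<beta> \<le> y} = y"
proof -
  let ?I1 = "{0<..min a y}" and ?I2 = "{a<..min (1 - s) (y - s)}"
    and ?I3 = "{1 - s<..min 1 (y - s + (1 - a))}"
  have "{\<beta>\<in>space uniform01. cyclic_shift a s \<beta> \<le> y} = cyclic_shift a s -` {..y} \<inter> {0<..<1}"
    by (auto simp: space_uniform01)
  then have "measure uniform01 {\<beta>\<in>space uniform01. cyclic_shift a s \<beta> \<le> y} =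
      measure lborel (cyclic_shift a s -` {..y} \<inter> {0<..1})"
    by (simp add: measure_uniform01 measurable_sets_borel[OF cyclic_shift_measurable])
  also have "cyclic_shift a s -` {..y} \<inter> {0<..1} = ?I1 \<union> ?I2 \<union> ?I3"
    using a s by (auto simp: cyclic_shift_def split: if_splits)
  also have "measure lborel (?I1 \<union> ?I2 \<union> ?I3) =
      measure lborel ?I1 + measure lborel ?I2 + measure lborel ?I3"
  proof -
    have finite: "emeasure lborel A \<noteq> \<top>" if "A \<subseteq> {0..2}" for A :: "real set"
      using emeasure_bounded_finite[of A] bounded_subset[OF bounded_closed_interval that] by simp
    have sub: "?I1 \<subseteq> {0..2}" "?I2 \<subseteq> {0..2}" "?I3 \<subseteq> {0..2}" using a s by auto
    have "measure lborel (?I1 \<union> ?I2) = measure lborel ?I1 + measure lborel ?I2"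
      by (rule measure_Union) (use sub in \<open>auto intro!: finite\<close>)
    moreover have "(?I1 \<union> ?I2) \<inter> ?I3 = {}" using a s by auto
    ultimately show ?thesis
      using sub by (subst measure_Union) (auto intro!: finite)
  qed
  also have "\<dots> = y"
  proof -
    have Ioc: "measure lborel {l<..u::real} = max 0 (u - l)" for l u
      by (cases "l \<le> u") auto
    consider "y \<le> a" | "a < y" "y < a + s" | "a + s \<le> y" by linarith
    then show ?thesis
      unfolding Ioc by cases (use a s y in \<open>simp_all add: max_def min_def\<close>)
  qed
  finally show ?thesis .
qed

lemma distr_cyclic_shift:
  assumes "0 \<le> a" "a < 1" "0 \<le> s" "s < 1 - a"
  shows "distr uniform01 borel (cyclic_shift a s) = distr uniform01 borel (\<lambda>x. x)"
proof (rule distr_eq_uniform01I[OF prob_space_uniform01])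
  show "cyclic_shift a s \<in> borel_measurable uniform01"
    by (simp add: measurable_uniform01I)
  show "0 \<le> cyclic_shift a s \<beta> \<and> cyclic_shift a s \<beta> \<le> 1" if "\<beta> \<in> space uniform01" for \<beta>
    using that assms by (auto simp: space_uniform01 cyclic_shift_def)
qed (use measure_cyclic_shift_le[OF assms] in auto)

lemma bij_betw_add_mod:
  fixes n j :: nat
  assumes "0 < n"
  shows "bij_betw (\<lambda>k. (j + k) mod n) {..<n} {..<n}"
proof -
  have "k = k'" if "k < n" "k' < n" "(j + k) mod n = (j + k') mod n" for k k'
  proof -
    have mod: "x mod n = (if x < n then x else x - n)" if "x < 2 * n" for x
      using that by (simp add: mod_if)
    have "(j mod n + k) mod n = (j mod n + k') mod n" using that(3) by (simp add: mod_add_left_eq)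
    moreover have "j mod n < n" using assms by simp
    ultimately show ?thesis
      using mod[of "j mod n + k"] mod[of "j mod n + k'"] that(1,2) by (auto split: if_splits)
  qed
  then have "inj_on (\<lambda>k. (j + k) mod n) {..<n}" by (auto intro!: inj_onI)
  moreover have "(\<lambda>k. (j + k) mod n) ` {..<n} \<subseteq> {..<n}" using assms by auto
  ultimately show ?thesis unfolding bij_betw_def using endo_inj_surj by blast
qed

text \<open>If \<open>\<beta>\<close> lies in the \<open>j\<^sub>0\<close>-th grid cell of \<open>(a, 1]\<close>, then its shift by k grid steps
  lies above the left end point of cell \<open>(j\<^sub>0 + k) mod n\<close>; summing over k counts every grid point
  once.\<close>

lemma sum_grid_le_sum_cyclic_shift:
  fixes q :: "real \<Rightarrow> real"
  assumes q: "mono q" and a: "0 \<le> a" "a < 1" and n: "0 < n" and \<beta>: "a < \<beta>" "\<beta> \<le> 1"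
  defines "w \<equiv> (1 - a) / real n"
  shows "(\<Sum>j<n. q (a + real j * w)) \<le> (\<Sum>k<n. q (cyclic_shift a (real k * w) \<beta>))"
proof -
  have w: "0 < w" "real n * w = 1 - a" using a n by (auto simp: w_def)
  define t where "t = (\<beta> - a) / w"
  have t: "0 < t" "t \<le> real n" using \<beta> w by (auto simp: t_def field_simps)
  define j0 where "j0 = nat (\<lceil>t\<rceil> - 1)"
  have j0: "real j0 < t" "t \<le> real j0 + 1" "j0 < n" using t by (auto simp: j0_def) linarith+
  have cell: "a + real j0 * w < \<beta>" "\<beta> \<le> a + (real j0 + 1) * w"
    using j0 w by (auto simp: t_def field_simps)
  have above: "a + real ((j0 + k) mod n) * w \<le> cyclic_shift a (real k * w) \<beta>" if k: "k < n" for k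
  proof (cases "j0 + k < n")
    case True
    then have "(real j0 + 1 + real k) * w \<le> real n * w" using w by (intro mult_right_mono) auto
    then have "\<beta> + real k * w \<le> a + real n * w" using cell by (simp add: algebra_simps)
    then have "cyclic_shift a (real k * w) \<beta> = \<beta> + real k * w"
      using \<beta> w by (simp add: cyclic_shift_def)
    then show ?thesis using True cell by (simp add: algebra_simps)
  next
    case False
    then have "a + real n * w \<le> a + (real j0 + real k) * w"
      using w by (intro add_left_mono mult_right_mono) auto
    then have "1 < \<beta> + real k * w" using cell w by (simp add: algebra_simps)
    then have "cyclic_shift a (real k * w) \<beta> = \<beta> + real k * w - (1 - a)"
      using \<beta> by (simp add: cyclic_shift_def)
    moreover have "(j0 + k) mod n = j0 + k - n" using False j0(3) k by (simp add: mod_if)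
    moreover have "real (j0 + k - n) = real j0 + real k - real n" using False by auto
    ultimately show ?thesis using cell w by (simp add: algebra_simps)
  qed
  have "(\<Sum>j<n. q (a + real j * w)) = (\<Sum>k<n. q (a + real ((j0 + k) mod n) * w))"
    using sum.reindex_bij_betw[OF bij_betw_add_mod[OF n, of j0], of "\<lambda>j. q (a + real j * w)"]
    by simp
  also have "\<dots> \<le> (\<Sum>k<n. q (cyclic_shift a (real k * w) \<beta>))"
    by (intro sum_mono monoD[OF q] above) auto
  finally show ?thesis .
qed

lemma indicator_Ioc_grid:
  fixes x w :: real
  assumes "0 < w"
  shows "indicator {x<..x + real m * w} \<beta> =
    (\<Sum>j<m. indicator {x + real j * w<..x + (real j + 1) * w} \<beta> :: real)"
proof (induction m)
  case (Suc m)
  have h: "x \<le> x + w * real m" using assms by simp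
  then have "indicator {x<..x + real (Suc m) * w} \<beta> = (indicator {x<..x + real m * w} \<beta> :: real) +
      indicator {x + real m * w<..x + (real m + 1) * w} \<beta>"
    using assms h by (auto simp: indicator_def algebra_simps) (use h in linarith)
  then show ?case using Suc by simp
qed simp

lemma integral_uniform01_mono_le_upper_sum:
  fixes q :: "real \<Rightarrow> real"
  assumes q: "mono q" and bound: "\<And>x. \<bar>q x\<bar> \<le> C" and a: "0 \<le> a" "a < 1" and n: "0 < n"
  defines "w \<equiv> (1 - a) / real n"
  shows "integral\<^sup>L uniform01 (\<lambda>\<beta>. indicator {a<..1} \<beta> * q \<beta>)
    \<le> w * (\<Sum>j<n. q (a + real j * w)) + 2 * C * w"
proof -
  have w: "0 < w" "real n * w = 1 - a" using a n by (auto simp: w_def)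
  have C: "0 \<le> C" using bound[of 0] by linarith
  let ?I = "\<lambda>j::nat. {a + real j * w<..a + (real j + 1) * w}"
  have cell: "0 \<le> a + real j * w" "a + real j * w \<le> a + (real j + 1) * w"
      "a + (real j + 1) * w \<le> 1" if "j < n" for j
  proof -
    have "(real j + 1) * w \<le> real n * w" using that w by (intro mult_right_mono) auto
    then show "a + (real j + 1) * w \<le> 1" using w by simp
  qed (use a w in auto)
  have integrable: "integrable uniform01 (\<lambda>\<beta>. indicator (?I j) \<beta> * f \<beta>)"
    if "f \<in> borel_measurable borel" "\<And>x. \<bar>f x\<bar> \<le> C" for j f
    by (rule integrable_uniform01_bounded[where B=C]) (use that C in \<open>auto simp: indicator_def\<close>)
  have "integral\<^sup>L uniform01 (\<lambda>\<beta>. indicator {a<..1} \<beta> * q \<beta>) =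
      integral\<^sup>L uniform01 (\<lambda>\<beta>. \<Sum>j<n. indicator (?I j) \<beta> * q \<beta>)"
    using indicator_Ioc_grid[OF w(1), of a n] w(2) by (simp add: sum_distrib_right)
  also have "\<dots> = (\<Sum>j<n. integral\<^sup>L uniform01 (\<lambda>\<beta>. indicator (?I j) \<beta> * q \<beta>))"
    using borel_measurable_mono[OF q] bound by (intro Bochner_Integration.integral_sum integrable)
  also have "\<dots> \<le> (\<Sum>j<n. integral\<^sup>L uniform01 (\<lambda>\<beta>. indicator (?I j) \<beta> * q (a + (real j + 1) * w)))"
    using borel_measurable_mono[OF q] bound
    by (intro sum_mono integral_mono integrable)
      (auto simp: indicator_def intro: monoD[OF q])
  also have "\<dots> = (\<Sum>j<n. q (a + real (Suc j) * w) * w)"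
    by (intro sum.cong refl, subst integral_uniform01_indicator_Ioc)
      (use cell in \<open>auto simp: algebra_simps\<close>)
  also have "\<dots> = (\<Sum>j<n. q (a + real (Suc j) * w)) * w"
    by (simp add: sum_distrib_right)
  also have "(\<Sum>j<n. q (a + real (Suc j) * w)) =
      (\<Sum>j<n. q (a + real j * w)) + (q (a + real n * w) - q a)"
    using sum_lessThan_telescope[of "\<lambda>j. q (a + real j * w)" n] by (simp add: sum_subtractf)
  also have "q (a + real n * w) - q a \<le> 2 * C"
    using bound[of "a + real n * w"] bound[of a] by linarith
  finally show ?thesis using w by (simp add: algebra_simps)
qed

lemma quasi_convex_average_le:
  assumes qc: "quasi_convex M \<rho>" and "0 < n"
    and Z: "\<And>k. k < n \<Longrightarrow> Z k \<in> Linf M \<and> \<rho> (Z k) \<le> r"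
  shows "(\<lambda>\<omega>. (\<Sum>k<n. Z k \<omega>) / real n) \<in> Linf M \<and> \<rho> (\<lambda>\<omega>. (\<Sum>k<n. Z k \<omega>) / real n) \<le> r"
proof -
  obtain m where n: "n = Suc m" using \<open>0 < n\<close> by (cases n) auto
  have "(\<lambda>\<omega>. (\<Sum>k<Suc m. Z k \<omega>) / real (Suc m)) \<in> Linf M \<and>
      \<rho> (\<lambda>\<omega>. (\<Sum>k<Suc m. Z k \<omega>) / real (Suc m)) \<le> r"
    using Z unfolding n
  proof (induction m)
    case 0
    then show ?case by simp
  next
    case (Suc m)
    define S where "S = (\<lambda>\<omega>. (\<Sum>k<Suc m. Z k \<omega>) / real (Suc m))"
    have S: "S \<in> Linf M \<and> \<rho> S \<le> r" unfolding S_def using Suc by auto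
    have last: "Z (Suc m) \<in> Linf M" "\<rho> (Z (Suc m)) \<le> r" using Suc.prems[of "Suc m"] by auto
    define \<gamma> where "\<gamma> = 1 / real (Suc (Suc m))"
    have \<gamma>: "0 \<le> \<gamma>" "\<gamma> \<le> 1" by (auto simp: \<gamma>_def)
    have "(\<Sum>k<Suc (Suc m). Z k \<omega>) / real (Suc (Suc m)) = \<gamma> * Z (Suc m) \<omega> + (1 - \<gamma>) * S \<omega>" for \<omega>
    proof -
      have "(1 - 1 / (x + 1)) * (T / x) = T / (x + 1)" if "0 < x" for x T :: real
        using that by (simp add: field_simps)
      from this[of "real (Suc m)" "\<Sum>k<Suc m. Z k \<omega>"]
      have "(1 - \<gamma>) * S \<omega> = (\<Sum>k<Suc m. Z k \<omega>) / real (Suc (Suc m))"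
        unfolding S_def \<gamma>_def by (simp del: sum.lessThan_Suc)
      then show ?thesis
        unfolding sum.lessThan_Suc[of _ "Suc m"]
        by (simp add: \<gamma>_def add_divide_distrib del: sum.lessThan_Suc)
    qed
    then have avg: "(\<lambda>\<omega>. (\<Sum>k<Suc (Suc m). Z k \<omega>) / real (Suc (Suc m))) =
        (\<lambda>\<omega>. \<gamma> * Z (Suc m) \<omega> + (1 - \<gamma>) * S \<omega>)" by simp
    have "\<rho> (\<lambda>\<omega>. \<gamma> * Z (Suc m) \<omega> + (1 - \<gamma>) * S \<omega>) \<le> max (\<rho> (Z (Suc m))) (\<rho> S)"
      using qc last S \<gamma> unfolding quasi_convex_def by blast
    also have "\<dots> \<le> r" using last S by simp
    finally show ?case unfolding avg using Linf_convex_combination[OF last(1) _ \<gamma>] S by simp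
  qed
  then show ?thesis unfolding n .
qed

context atomless_prob_space
begin

lemma distr_shifted_uniform_rv:
  assumes "q \<in> borel_measurable borel" "0 \<le> a" "a < 1" "0 \<le> s" "s < 1 - a"
  shows "distr M borel (\<lambda>\<omega>. q (cyclic_shift a s (uniform_rv \<omega>))) = distr uniform01 borel q"
proof -
  have id: "(\<lambda>x. x) \<in> borel_measurable uniform01" by (simp add: measurable_uniform01I)
  have "distr M borel (\<lambda>\<omega>. q (cyclic_shift a s (uniform_rv \<omega>))) =
      distr uniform01 borel (\<lambda>\<beta>. q (cyclic_shift a s \<beta>))"
    using assms(1) by (intro distr_compose_eq[OF uniform_rv_measurable id _ distr_uniform_rv]) simp
  also have "\<dots> = distr uniform01 borel q"
    using distr_compose_eq[OF _ id assms(1) distr_cyclic_shift[OF assms(2-5)]]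
    by (simp add: measurable_uniform01I)
  finally show ?thesis .
qed

lemma distr_shifted_quantile:
  assumes "X \<in> borel_measurable M" "q \<in> borel_measurable borel"
    and "\<And>\<beta>. \<beta> \<in> {0<..<1} \<Longrightarrow> q \<beta> = quantile M X \<beta>"
    and "0 \<le> a" "a < 1" "0 \<le> s" "s < 1 - a"
  shows "distr M borel (\<lambda>\<omega>. q (cyclic_shift a s (uniform_rv \<omega>))) = distr M borel X"
proof -
  have "distr M borel (\<lambda>\<omega>. q (cyclic_shift a s (uniform_rv \<omega>))) = distr uniform01 borel q"
    by (rule distr_shifted_uniform_rv[OF assms(2,4-7)])
  also have "\<dots> = distr uniform01 borel (quantile M X)"
    by (rule distr_cong) (auto simp: space_uniform01 assms(3))
  also have "\<dots> = distr M borel X"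
    by (rule distr_quantile[OF assms(1)])
  finally show ?thesis .
qed

text \<open>Above the level a the shifted copies sum to at least the lower Riemann sum (lemma
  \<open>sum_grid_le_sum_cyclic_shift\<close>), so the average can only fall below that sum on the event
  \<open>uniform_rv \<le> a\<close>, which has probability exactly a.\<close>

lemma VaR_plus_average_shifts_ge:
  assumes q: "mono q" and a: "0 \<le> a" "a < 1" and n: "0 < n"
  defines "w \<equiv> (1 - a) / real n"
  shows "ereal ((\<Sum>j<n. q (a + real j * w)) / real n)
    \<le> VaR_plus M a (\<lambda>\<omega>. (\<Sum>k<n. q (cyclic_shift a (real k * w) (uniform_rv \<omega>))) / real n)"
  unfolding VaR_plus_def
proof (rule Inf_greatest, clarify)
  let ?L = "(\<Sum>j<n. q (a + real j * w)) / real n"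
    and ?Y = "\<lambda>\<omega>. (\<Sum>k<n. q (cyclic_shift a (real k * w) (uniform_rv \<omega>))) / real n"
  fix x assume x: "a < measure M {\<omega> \<in> space M. ?Y \<omega> \<le> x}"
  show "ereal ?L \<le> ereal x"
  proof (rule ccontr)
    assume "\<not> ereal ?L \<le> ereal x"
    then have x_less: "x < ?L" by simp
    have "{\<omega> \<in> space M. ?Y \<omega> \<le> x} \<subseteq> {\<omega> \<in> space M. uniform_rv \<omega> \<le> a}"
    proof safe
      fix \<omega> assume "\<omega> \<in> space M" "?Y \<omega> \<le> x"
      show "uniform_rv \<omega> \<le> a"
      proof (rule ccontr)
        assume "\<not> uniform_rv \<omega> \<le> a"
        then have "(\<Sum>j<n. q (a + real j * w)) \<le>
            (\<Sum>k<n. q (cyclic_shift a (real k * w) (uniform_rv \<omega>)))"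
          using sum_grid_le_sum_cyclic_shift[OF q a n] uniform_rv_range(2)[of \<omega>]
          by (simp add: w_def)
        then have "?L \<le> ?Y \<omega>" by (simp add: divide_right_mono)
        then show False using \<open>?Y \<omega> \<le> x\<close> x_less by simp
      qed
    qed
    moreover have "{\<omega> \<in> space M. uniform_rv \<omega> \<le> a} \<in> sets M"
      using uniform_rv_measurable by measurable
    ultimately have "measure M {\<omega> \<in> space M. ?Y \<omega> \<le> x} \<le> measure M {\<omega> \<in> space M. uniform_rv \<omega> \<le> a}"
      by (rule finite_measure_mono)
    also have "\<dots> = a" using measure_uniform_rv_le a by simp
    finally show False using x by simp
  qed
qed

lemma exists_copies_with_large_average:
  assumes X: "X \<in> borel_measurable M" "AE \<omega> in M. \<bar>X \<omega>\<bar> \<le> C" "0 \<le> C"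
    and a: "0 \<le> a" "a < 1" and n: "0 < n"
  obtains Y where "\<And>k. k < n \<Longrightarrow> Y k \<in> Linf M \<and> distr M borel (Y k) = distr M borel X"
    and "ereal (tail_integral M a X / (1 - a) - 2 * C / real n)
      \<le> VaR_plus M a (\<lambda>\<omega>. (\<Sum>k<n. Y k \<omega>) / real n)"
proof -
  obtain q where q: "mono q" "\<And>x. \<bar>q x\<bar> \<le> C" "\<And>\<beta>. \<beta> \<in> {0<..<1} \<Longrightarrow> q \<beta> = quantile M X \<beta>"
    using monotone_quantile_extension[OF X] by blast
  have q_measurable: "q \<in> borel_measurable borel" using q(1) by (rule borel_measurable_mono)
  define w where "w = (1 - a) / real n"
  have w: "0 < w" "real n * w = 1 - a" using a n by (auto simp: w_def)
  define Y where "Y = (\<lambda>k \<omega>. q (cyclic_shift a (real k * w) (uniform_rv \<omega>)))"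
  show ?thesis
  proof (rule that)
    fix k assume "k < n"
    then have "real k * w < real n * w" using w by (intro mult_strict_right_mono) auto
    then have shift: "0 \<le> real k * w" "real k * w < 1 - a" using w by auto
    have "Y k \<in> borel_measurable M"
      unfolding Y_def using q_measurable uniform_rv_measurable by measurable
    then show "Y k \<in> Linf M \<and> distr M borel (Y k) = distr M borel X"
      using q(2) distr_shifted_quantile[OF X(1) q_measurable q(3) a shift]
      by (auto simp: Linf_def Y_def intro!: exI[of _ C])
  next
    let ?S = "\<Sum>j<n. q (a + real j * w)"
    have "tail_integral M a X = integral\<^sup>L uniform01 (\<lambda>\<beta>. indicator {a<..1} \<beta> * q \<beta>)"
      unfolding tail_integral_def
      by (rule Bochner_Integration.integral_cong) (auto simp: space_uniform01 q(3))
    also have "\<dots> \<le> w * ?S + 2 * C * w"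
      unfolding w_def by (rule integral_uniform01_mono_le_upper_sum[OF q(1,2) a n])
    finally have "tail_integral M a X / (1 - a) \<le> (w * ?S + 2 * C * w) / (1 - a)"
      using a by (intro divide_right_mono) auto
    also have "\<dots> = ?S / real n + 2 * C / real n"
      using a n by (simp add: w_def field_simps)
    finally have "tail_integral M a X / (1 - a) \<le> ?S / real n + 2 * C / real n" .
    then have "ereal (tail_integral M a X / (1 - a) - 2 * C / real n) \<le> ereal (?S / real n)"
      by simp
    also have "\<dots> \<le> VaR_plus M a (\<lambda>\<omega>. (\<Sum>k<n. Y k \<omega>) / real n)"
      unfolding Y_def w_def by (rule VaR_plus_average_shifts_ge[OF q(1) a n])
    finally show "ereal (tail_integral M a X / (1 - a) - 2 * C / real n)
      \<le> VaR_plus M a (\<lambda>\<omega>. (\<Sum>k<n. Y k \<omega>) / real n)" .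
  qed
qed

theorem ES_le_of_VaR_plus_le:
  assumes X: "X \<in> Linf M" and qc: "quasi_convex M \<rho>" and li: "law_invariant M \<rho>"
    and dominates: "\<forall>Y\<in>Linf M. VaR_plus M a Y \<le> \<rho> Y" and a: "0 \<le> a" "a < 1"
  shows "ES M a X \<le> \<rho> X"
proof -
  obtain C where C: "X \<in> borel_measurable M" "0 \<le> C" "AE \<omega> in M. \<bar>X \<omega>\<bar> \<le> C"
    using LinfE[OF X] by blast
  have approx: "ereal (tail_integral M a X / (1 - a) - 2 * C / real n) \<le> \<rho> X" if n: "0 < n" for n
  proof -
    obtain Y where Y: "\<And>k. k < n \<Longrightarrow> Y k \<in> Linf M \<and> distr M borel (Y k) = distr M borel X"
      and VaR_avg: "ereal (tail_integral M a X / (1 - a) - 2 * C / real n)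
        \<le> VaR_plus M a (\<lambda>\<omega>. (\<Sum>k<n. Y k \<omega>) / real n)"
      using exists_copies_with_large_average[OF C(1,3,2) a n] by blast
    have "\<rho> (Y k) \<le> \<rho> X" if "k < n" for k
    proof -
      have "\<rho> (Y k) = \<rho> X"
        using Y[OF that] X by (intro li[unfolded law_invariant_def, rule_format]) auto
      then show ?thesis by simp
    qed
    then have avg: "(\<lambda>\<omega>. (\<Sum>k<n. Y k \<omega>) / real n) \<in> Linf M"
        "\<rho> (\<lambda>\<omega>. (\<Sum>k<n. Y k \<omega>) / real n) \<le> \<rho> X"
      using quasi_convex_average_le[OF qc n, of Y] Y by auto
    note VaR_avg
    also have "VaR_plus M a (\<lambda>\<omega>. (\<Sum>k<n. Y k \<omega>) / real n) \<le> \<rho> (\<lambda>\<omega>. (\<Sum>k<n. Y k \<omega>) / real n)"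
      using dominates avg(1) by blast
    also note avg(2)
    finally show ?thesis .
  qed
  have "((\<lambda>n. ereal (tail_integral M a X / (1 - a) - 2 * C / real n))
      \<longlongrightarrow> ereal (tail_integral M a X / (1 - a) - 0)) sequentially"
    by (intro tendsto_ereal tendsto_diff tendsto_const lim_const_over_n)
  moreover have "eventually (\<lambda>n. ereal (tail_integral M a X / (1 - a) - 2 * C / real n) \<le> \<rho> X)
      sequentially"
    unfolding eventually_sequentially using approx by (intro exI[of _ 1]) auto
  ultimately have "ereal (tail_integral M a X / (1 - a) - 0) \<le> \<rho> X"
    by (rule tendsto_le[OF trivial_limit_sequentially tendsto_const])
  then show ?thesis using ES_eq_tail_integral[OF C(1) a] by simp
qed

text \<open>Domination of \<open>VaR\<^sub>\<alpha>\<close> implies domination of \<open>VaR\<^sup>+\<^sub>b\<close> for all \<open>b < \<alpha>\<close>,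
  hence \<open>\<rho> X \<ge> ES\<^sub>b X\<close>; by \<open>tail_integral_diff_le\<close>, \<open>ES\<^sub>b X\<close> is bounded below by a
  quantity tending to \<open>ES\<^sub>\<alpha> X\<close> as b increases to \<open>\<alpha>\<close>.\<close>

lemma ES_le_of_VaR_le_below_one:
  assumes X: "X \<in> Linf M" and qc: "quasi_convex M \<rho>" and li: "law_invariant M \<rho>"
    and dominates: "\<forall>Y\<in>Linf M. VaR M \<alpha> Y \<le> \<rho> Y" and \<alpha>: "0 < \<alpha>" "\<alpha> < 1"
  shows "ES M \<alpha> X \<le> \<rho> X"
proof -
  obtain C where C: "X \<in> borel_measurable M" "0 \<le> C" "AE \<omega> in M. \<bar>X \<omega>\<bar> \<le> C"
    using LinfE[OF X] by blast
  let ?T = "tail_integral M \<alpha> X"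
  have lower: "ereal ((?T - C * (\<alpha> - b)) / (1 - b)) \<le> \<rho> X" if b: "0 < b" "b < \<alpha>" for b
  proof -
    have "VaR_plus M b Y \<le> \<rho> Y" if "Y \<in> Linf M" for Y
      using VaR_plus_le_VaR[OF b(2), of M Y] dominates that by (blast intro: order.trans)
    then have ES_b: "ES M b X \<le> \<rho> X"
      using b \<alpha> by (intro ES_le_of_VaR_plus_le[OF X qc li]) auto
    have "(?T - C * (\<alpha> - b)) / (1 - b) \<le> tail_integral M b X / (1 - b)"
      using tail_integral_diff_le[OF C(1,3,2), of b \<alpha>] b \<alpha> by (intro divide_right_mono) auto
    then have "ereal ((?T - C * (\<alpha> - b)) / (1 - b)) \<le> ES M b X"
      using ES_eq_tail_integral[OF C(1), of b] b \<alpha> by simp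
    then show ?thesis using ES_b by (rule order.trans)
  qed
  have "((\<lambda>b. ereal ((?T - C * (\<alpha> - b)) / (1 - b))) \<longlongrightarrow> ereal ((?T - C * (\<alpha> - \<alpha>)) / (1 - \<alpha>)))
      (at_left \<alpha>)"
    using \<alpha> by (intro tendsto_intros) auto
  moreover have "eventually (\<lambda>b. ereal ((?T - C * (\<alpha> - b)) / (1 - b)) \<le> \<rho> X) (at_left \<alpha>)"
    using eventually_at_left_real[OF \<alpha>(1)] by eventually_elim (rule lower; simp)
  ultimately have "ereal ((?T - C * (\<alpha> - \<alpha>)) / (1 - \<alpha>)) \<le> \<rho> X"
    by (rule tendsto_le[OF trivial_limit_at_left_real tendsto_const])
  then show ?thesis using ES_eq_tail_integral[OF C(1)] \<alpha> by simp
qed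

theorem ES_le_of_VaR_le:
  assumes "X \<in> Linf M" "quasi_convex M \<rho>" "law_invariant M \<rho>"
    and "\<forall>Y\<in>Linf M. VaR M \<alpha> Y \<le> \<rho> Y" "0 < \<alpha>" "\<alpha> \<le> 1"
  shows "ES M \<alpha> X \<le> \<rho> X"
  using ES_le_of_VaR_le_below_one[OF assms(1-5)] assms(1,4,6)
  by (cases "\<alpha> = 1") (auto simp: ES_one_eq_VaR)

end

theorem theorem1:
  fixes M :: "'a measure"
  assumes "prob_space M" and "atomless M"
  shows
    "(\<forall>\<alpha>::real. 0 < \<alpha> \<and> \<alpha> \<le> 1 \<longrightarrow>
        quasi_convex M (ES M \<alpha>) \<and> law_invariant M (ES M \<alpha>) \<and>
        (\<forall>X\<in>Linf M. ES M \<alpha> X \<ge> VaR M \<alpha> X) \<and>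
        (\<forall>\<rho> :: ('a \<Rightarrow> real) \<Rightarrow> ereal.
           quasi_convex M \<rho> \<and> law_invariant M \<rho> \<and> (\<forall>X\<in>Linf M. \<rho> X \<ge> VaR M \<alpha> X)
           \<longrightarrow> (\<forall>X\<in>Linf M. \<rho> X \<ge> ES M \<alpha> X)))
   \<and>
    (\<forall>\<alpha>::real. 0 \<le> \<alpha> \<and> \<alpha> < 1 \<longrightarrow>
        quasi_convex M (ES M \<alpha>) \<and> law_invariant M (ES M \<alpha>) \<and>
        (\<forall>X\<in>Linf M. ES M \<alpha> X \<ge> VaR_plus M \<alpha> X) \<and>
        (\<forall>\<rho> :: ('a \<Rightarrow> real) \<Rightarrow> ereal.
           quasi_convex M \<rho> \<and> law_invariant M \<rho> \<and> (\<forall>X\<in>Linf M. \<rho> X \<ge> VaR_plus M \<alpha> X)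
           \<longrightarrow> (\<forall>X\<in>Linf M. \<rho> X \<ge> ES M \<alpha> X)))"
proof -
  interpret atomless_prob_space M
    using assms by (simp add: atomless_prob_space_def atomless_prob_space_axioms_def)
  show ?thesis
    by (intro conjI allI impI ballI)
      (auto intro: ES_quasi_convex ES_law_invariant VaR_le_ES VaR_plus_le_ES
        ES_le_of_VaR_le ES_le_of_VaR_plus_le)
qed

end
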